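(* Let $0<p<1$, $p'=p/(p-1)$ (so $p'<0$), $q>0$, and let $f$ be a measurable function on a measure space with non-increasing rearrangement $f^*$. Define $$\|f\|^*_{p,q}=\Big(\int_0^\infty \big(f^*(t)t^{1/p}\big)^q\frac{dt}{t}\Big)^{1/q},\qquad \|f\|^{**}_{p,q}=\Big(\int_0^\infty\Big(\int_t^\infty f^*(u)du\Big)^q t^{-q/p'}\frac{dt}{t}\Big)^{1/q}.$$ If $q\ge1$, then $$\big(q\,B(q,-q/p')\big)^{1/q}\|f\|^*_{p,q}\le\|f\|^{**}_{p,q}\le -p'\,\|f\|^*_{p,q},$$ and if $0<q\le1$ both inequalities hold in the reversed direction. Both constants $(q\,B(q,-q/p'))^{1/q}$ and $-p'$ are sharp for all $q>0$.
   Context: $f^*$ is the non-increasing rearrangement of $f$. $B(u,v)=\int_0^1 t^{u-1}(1-t)^{v-1}dt$ is the Euler beta function. *)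

theory Defs
  imports "HOL-Analysis.Analysis"
begin

text \<open>Real power of an extended non-negative real, for positive exponents
  (infinity stays infinity).\<close>
definition enn_powr :: "ennreal \<Rightarrow> real \<Rightarrow> ennreal" where
  "enn_powr x a = (if x = \<infinity> then \<infinity> else ennreal (enn2real x powr a))"

definition rearr :: "'a measure \<Rightarrow> ('a \<Rightarrow> real) \<Rightarrow> real \<Rightarrow> ennreal" where
  "rearr M f t = Inf {s::ennreal. emeasure M {x \<in> space M. s < ennreal \<bar>f x\<bar>} \<le> ennreal t}"

definition pconj :: "real \<Rightarrow> real" where
  "pconj p = p / (p - 1)"

definition lorentz_star :: "'a measure \<Rightarrow> ('a \<Rightarrow> real) \<Rightarrow> real \<Rightarrow> real \<Rightarrow> ennreal" where
  "lorentz_star M f p q =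
     enn_powr (\<integral>\<^sup>+ t \<in> {0<..}. enn_powr (rearr M f t * ennreal (t powr (1/p))) q
                                 * ennreal (1/t) \<partial>lborel) (1/q)"

definition lorentz_sstar :: "'a measure \<Rightarrow> ('a \<Rightarrow> real) \<Rightarrow> real \<Rightarrow> real \<Rightarrow> ennreal" where
  "lorentz_sstar M f p q =
     enn_powr (\<integral>\<^sup>+ t \<in> {0<..}. enn_powr (\<integral>\<^sup>+ u \<in> {t<..}. rearr M f u \<partial>lborel) q
                                 * ennreal (t powr (- q / pconj p)) * ennreal (1/t) \<partial>lborel) (1/q)"

end

theory Submission
  imports Defs
begin

text \<open>Write \<open>g = f\<^sup>*\<close>, \<open>a = 1/p\<close> and \<open>c = a - 1 = -1/p'\<close>. Then
  \<open>\<parallel>f\<parallel>\<^sup>*\<^sup>q = \<integral> g(u)\<^sup>q u\<^sup>q\<^sup>a\<^sup>-\<^sup>1 du\<close> and \<open>\<parallel>f\<parallel>\<^sup>*\<^sup>*\<^sup>q = \<integral> G(t)\<^sup>q t\<^sup>q\<^sup>c\<^sup>-\<^sup>1 dt\<close> with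
  \<open>G(t) = \<integral>\<^sub>t\<^sup>\<infinity> g\<close>.

  Hoelder's inequality against the weight \<open>u\<^sup>-\<^sup>a\<close> bounds \<open>G(t)\<^sup>q\<close> by
  \<open>(t\<^sup>-\<^sup>c/c)\<^sup>q\<^sup>-\<^sup>1 \<integral>\<^sub>t\<^sup>\<infinity> g\<^sup>q u\<^sup>a\<^sup>(\<^sup>q\<^sup>-\<^sup>1\<^sup>)\<close> (from above if \<open>q \<ge> 1\<close>, from below if \<open>q \<le> 1\<close>),
  and integrating in \<open>t\<close> with Tonelli produces the constant \<open>c\<^sup>-\<^sup>q = (-p')\<^sup>q\<close>.
  Since \<open>g\<close> decreases, \<open>\<integral>\<^sub>t\<^sup>u g \<ge> (u - t) g(u)\<close>, and the chain rule turns this into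
  \<open>G(t)\<^sup>q \<ge> \<integral>\<^sub>t\<^sup>\<infinity> q (u - t)\<^sup>q\<^sup>-\<^sup>1 g(u)\<^sup>q du\<close> for \<open>q \<ge> 1\<close> (reversed for \<open>q \<le> 1\<close>);
  Tonelli and the Beta integral then produce the constant \<open>q B(q, qc)\<close>.

  The indicator of \<open>(0, 1)\<close> gives equality in the Beta estimate, and the profiles
  \<open>min 1 (x\<^sup>-\<^sup>b)\<close> with \<open>b \<down> a\<close> approach equality in the Hoelder estimate.\<close>

section \<open>Real powers of extended non-negative reals\<close>

lemma enn_powr_0 [simp]: "enn_powr 0 a = 0"
  by (simp add: enn_powr_def)

lemma enn_powr_top [simp]: "enn_powr top a = top"
  by (simp add: enn_powr_def)

lemma enn_powr_ennreal [simp]: "0 \<le> x \<Longrightarrow> enn_powr (ennreal x) a = ennreal (x powr a)"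
  by (simp add: enn_powr_def)

lemma enn_powr_1 [simp]: "enn_powr x 1 = x"
  by (cases x rule: ennreal_cases) auto

lemma enn_powr_one [simp]: "enn_powr 1 a = 1"
  using enn_powr_ennreal[of 1 a] by simp

lemma enn_powr_mono:
  assumes "0 < a" "x \<le> y"
  shows "enn_powr x a \<le> enn_powr y a"
proof (cases y rule: ennreal_cases)
  case (real r)
  then obtain s where "x = ennreal s" "0 \<le> s" "s \<le> r" using assms
    by (metis ennreal_cases ennreal_le_iff ennreal_neq_top top.extremum_uniqueI)
  then show ?thesis using real assms by (auto intro!: ennreal_leI powr_mono2)
qed simp

lemma enn_powr_le_iff:
  assumes "0 < a"
  shows "enn_powr x a \<le> enn_powr y a \<longleftrightarrow> x \<le> y"
proof
  assume le: "enn_powr x a \<le> enn_powr y a"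
  show "x \<le> y"
  proof (cases y rule: ennreal_cases)
    case (real r)
    then obtain s where s: "x = ennreal s" "0 \<le> s" using le
      by (cases x rule: ennreal_cases) (auto simp: top_unique)
    then have "s powr a \<le> r powr a" using le real by (auto simp: ennreal_le_iff2)
    then have "s \<le> r" using assms s real by (metis not_le powr_less_mono2)
    then show ?thesis using s real by auto
  qed simp
qed (rule enn_powr_mono[OF assms])

lemma enn_powr_less_iff: "0 < a \<Longrightarrow> enn_powr x a < enn_powr y a \<longleftrightarrow> x < y"
  using enn_powr_le_iff[of a y x] by (simp add: not_le[symmetric])

lemma enn_powr_eq_0_iff [simp]: "0 < a \<Longrightarrow> enn_powr x a = 0 \<longleftrightarrow> x = 0"
  using enn_powr_le_iff[of a x 0] by simp

lemma enn_powr_mult: assumes "0 < a" shows "enn_powr (x * y) a = enn_powr x a * enn_powr y a"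
proof (cases "x = 0 \<or> y = 0")
  case True then show ?thesis using assms by auto
next
  case False
  show ?thesis
  proof (cases x rule: ennreal_cases)
    case (real r)
    show ?thesis
    proof (cases y rule: ennreal_cases)
      case (real s)
      have "x * y = ennreal (r * s)" using real \<open>x = ennreal r\<close> \<open>0 \<le> r\<close> by (simp add: ennreal_mult)
      then have "enn_powr (x * y) a = ennreal (r powr a * s powr a)"
        using real \<open>0 \<le> r\<close> by (simp add: powr_mult)
      then show ?thesis using real \<open>x = ennreal r\<close> \<open>0 \<le> r\<close>
        by (simp add: ennreal_mult)
    next
      case top
      have "r > 0" using False \<open>x = ennreal r\<close> \<open>0 \<le> r\<close> by auto
      then have "ennreal (r powr a) \<noteq> 0" by simp
      then show ?thesis using top \<open>x = ennreal r\<close> \<open>0 \<le> r\<close> False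
        by (simp add: ennreal_mult_top)
    qed
  next
    case top
    have "enn_powr y a \<noteq> 0" using False assms by simp
    then show ?thesis using False top by (simp add: ennreal_top_mult)
  qed
qed

lemma enn_powr_powr: "0 < a \<Longrightarrow> 0 < b \<Longrightarrow> enn_powr (enn_powr x a) b = enn_powr x (a * b)"
  by (cases x rule: ennreal_cases) (auto simp: powr_powr)

lemma enn_powr_measurable [measurable]:
  assumes [measurable]: "f \<in> borel_measurable M"
  shows "(\<lambda>x. enn_powr (f x) a) \<in> borel_measurable M"
  unfolding enn_powr_def by measurable

lemma enn_powr_ennreal_mult:
  "0 < a \<Longrightarrow> 0 \<le> k \<Longrightarrow> enn_powr (ennreal k * x) a = ennreal (k powr a) * enn_powr x a"
  by (simp add: enn_powr_mult)

lemma ennreal_mult_enn_powr_inverse: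
  assumes "0 < q" "0 \<le> C"
  shows "ennreal C * enn_powr x (1/q) = enn_powr (ennreal (C powr q) * x) (1/q)"
  using assms by (simp add: enn_powr_ennreal_mult powr_powr)

lemma ennreal_mult_enn_powr_less:
  assumes "0 < q" "0 \<le> C" "ennreal (C powr q) * x < y"
  shows "ennreal C * enn_powr x (1/q) < enn_powr y (1/q)"
  using assms by (simp add: ennreal_mult_enn_powr_inverse enn_powr_less_iff)

lemma enn_powr_less_ennreal_mult:
  assumes "0 < q" "0 \<le> C" "y < ennreal (C powr q) * x"
  shows "enn_powr y (1/q) < ennreal C * enn_powr x (1/q)"
  using assms by (simp add: ennreal_mult_enn_powr_inverse enn_powr_less_iff)

lemma ennreal_Young_inequality:
  assumes "0 < \<theta>" "\<theta> < 1"
  shows "enn_powr x \<theta> * enn_powr y (1-\<theta>) \<le> ennreal \<theta> * x + ennreal (1-\<theta>) * y"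
proof (cases "x = \<infinity> \<or> y = \<infinity>")
  case True
  have t1: "ennreal \<theta> \<noteq> 0" "ennreal (1-\<theta>) \<noteq> 0" using assms by auto
  have eqn: "ennreal \<theta> * x + ennreal (1-\<theta>) * y = \<infinity>"
  proof (cases "x = \<infinity>")
    case True then show ?thesis using t1 by (simp add: ennreal_mult_top)
  next
    case False then have "y = \<infinity>" using \<open>x = \<infinity> \<or> y = \<infinity>\<close> by simp
    then show ?thesis using t1 by (simp add: ennreal_mult_top)
  qed
  show ?thesis unfolding eqn by simp
next
  case False
  then obtain r s where rs: "x = ennreal r" "y = ennreal s" "0 \<le> r" "0 \<le> s"
    by (cases x rule: ennreal_cases; cases y rule: ennreal_cases) auto
  have "r powr \<theta> * s powr (1-\<theta>) \<le> \<theta> * r + (1-\<theta>) * s"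
  proof (cases "r = 0 \<or> s = 0")
    case True then show ?thesis using assms rs by auto
  next
    case False then show ?thesis using Youngs_inequality_0[of \<theta> "1-\<theta>" r s] assms rs by auto
  qed
  then show ?thesis using rs assms
    by (simp add: ennreal_mult[symmetric] ennreal_plus[symmetric] del: ennreal_plus)
qed

lemma ennreal_Young_inequality_scaled:
  assumes "0 < \<theta>" "\<theta> < 1" "0 < \<alpha>" "0 < \<beta>"
  shows "enn_powr x \<theta> * enn_powr y (1-\<theta>)
    \<le> ennreal (\<alpha> powr \<theta> * \<beta> powr (1-\<theta>)) * (ennreal (\<theta>/\<alpha>) * x + ennreal ((1-\<theta>)/\<beta>) * y)"
proof -
  have x: "enn_powr x \<theta> = ennreal (\<alpha> powr \<theta>) * enn_powr (ennreal (1/\<alpha>) * x) \<theta>"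
    using assms by (simp add: enn_powr_ennreal_mult mult.assoc[symmetric] ennreal_mult[symmetric]
        powr_mult[symmetric] del: ennreal_mult)
  have y: "enn_powr y (1-\<theta>) = ennreal (\<beta> powr (1-\<theta>)) * enn_powr (ennreal (1/\<beta>) * y) (1-\<theta>)"
    using assms by (simp add: enn_powr_ennreal_mult mult.assoc[symmetric] ennreal_mult[symmetric]
        powr_mult[symmetric] del: ennreal_mult)
  have "enn_powr x \<theta> * enn_powr y (1-\<theta>) = ennreal (\<alpha> powr \<theta> * \<beta> powr (1-\<theta>)) *
      (enn_powr (ennreal (1/\<alpha>) * x) \<theta> * enn_powr (ennreal (1/\<beta>) * y) (1-\<theta>))"
    unfolding x y by (simp add: ennreal_mult mult_ac)
  also have "\<dots> \<le> ennreal (\<alpha> powr \<theta> * \<beta> powr (1-\<theta>)) *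
      (ennreal \<theta> * (ennreal (1/\<alpha>) * x) + ennreal (1-\<theta>) * (ennreal (1/\<beta>) * y))"
    by (intro mult_left_mono ennreal_Young_inequality assms) simp
  also have "\<dots> = ennreal (\<alpha> powr \<theta> * \<beta> powr (1-\<theta>)) * (ennreal (\<theta>/\<alpha>) * x + ennreal ((1-\<theta>)/\<beta>) * y)"
    using assms by (simp add: mult.assoc[symmetric] ennreal_mult[symmetric] del: ennreal_mult)
  finally show ?thesis .
qed

lemma nn_integral_Hoelder:
  assumes \<theta>: "0 < \<theta>" "\<theta> < 1"
    and [measurable]: "X \<in> borel_measurable M" "Y \<in> borel_measurable M"
  shows "(\<integral>\<^sup>+x. enn_powr (X x) \<theta> * enn_powr (Y x) (1-\<theta>) \<partial>M)
          \<le> enn_powr (\<integral>\<^sup>+x. X x \<partial>M) \<theta> * enn_powr (\<integral>\<^sup>+x. Y x \<partial>M) (1-\<theta>)"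
proof -
  define A where "A = (\<integral>\<^sup>+x. X x \<partial>M)"
  define B where "B = (\<integral>\<^sup>+x. Y x \<partial>M)"
  have "\<exists>\<alpha> \<beta>. A = ennreal \<alpha> \<and> B = ennreal \<beta> \<and> 0 < \<alpha> \<and> 0 < \<beta>"
    if "A \<noteq> 0" "B \<noteq> 0" "A \<noteq> \<infinity>" "B \<noteq> \<infinity>"
    using that by (cases A rule: ennreal_cases; cases B rule: ennreal_cases) force+
  then consider "A = 0 \<or> B = 0" | "A = \<infinity> \<or> B = \<infinity>" "A \<noteq> 0" "B \<noteq> 0"
    | \<alpha> \<beta> where "A = ennreal \<alpha>" "B = ennreal \<beta>" "0 < \<alpha>" "0 < \<beta>"
    by blast
  then show ?thesis
  proof cases
    case 1
    then have "AE x in M. X x = 0 \<or> Y x = 0"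
      unfolding A_def B_def by (auto simp: nn_integral_0_iff_AE)
    then have "(\<integral>\<^sup>+x. enn_powr (X x) \<theta> * enn_powr (Y x) (1-\<theta>) \<partial>M) = 0"
      using \<theta> by (subst nn_integral_0_iff_AE) (auto elim!: eventually_mono)
    then show ?thesis by simp
  next
    case 2
    then have "enn_powr A \<theta> * enn_powr B (1-\<theta>) = \<infinity>"
      using \<theta> by (auto simp: ennreal_top_mult ennreal_mult_top)
    then show ?thesis by (simp add: A_def B_def)
  next
    case 3
    define C where "C = \<alpha> powr \<theta> * \<beta> powr (1-\<theta>)"
    have "(\<integral>\<^sup>+x. enn_powr (X x) \<theta> * enn_powr (Y x) (1-\<theta>) \<partial>M) \<le>
        (\<integral>\<^sup>+x. ennreal C * (ennreal (\<theta>/\<alpha>) * X x + ennreal ((1-\<theta>)/\<beta>) * Y x) \<partial>M)"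
      unfolding C_def using 3 \<theta> by (intro nn_integral_mono ennreal_Young_inequality_scaled) auto
    also have "\<dots> = ennreal C * (ennreal (\<theta>/\<alpha>) * A + ennreal ((1-\<theta>)/\<beta>) * B)"
      unfolding A_def B_def by (simp add: nn_integral_cmult nn_integral_add)
    also have "\<dots> = ennreal C"
      using 3 \<theta> by (simp add: ennreal_mult[symmetric] ennreal_plus[symmetric] del: ennreal_plus)
    also have "\<dots> = enn_powr A \<theta> * enn_powr B (1-\<theta>)"
      using 3 by (simp add: C_def ennreal_mult)
    finally show ?thesis by (simp add: A_def B_def)
  qed
qed

section \<open>Integrals on the half-line\<close>

lemma antimono_borel_measurable:
  fixes g :: "real \<Rightarrow> 'b::{linorder_topology, second_countable_topology}"
  assumes "antimono g"
  shows "g \<in> borel_measurable borel"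
proof (rule borel_measurableI_greater)
  fix y
  define D where "D = {x. y < g x}"
  have down: "x \<in> D" if "z \<in> D" "x \<le> z" for x z
    using that assms less_le_trans unfolding D_def antimono_def by blast
  have "D \<in> sets borel"
  proof (cases "bdd_above D")
    case False
    have "D = UNIV"
    proof (intro set_eqI iffI)
      fix x
      from False obtain z where "z \<in> D" "x < z" unfolding bdd_above_def by (meson not_le)
      then show "x \<in> D" using down by auto
    qed simp
    then show ?thesis by simp
  next
    case bdd: True
    show ?thesis
    proof (cases "D = {}")
      case False
      have "{..<Sup D} \<subseteq> D"
        using down less_cSup_iff[OF False bdd] by auto
      moreover have "D \<subseteq> {..Sup D}" using bdd by (auto intro: cSup_upper)
      ultimately have "D = {..<Sup D} \<union> (D \<inter> {Sup D})" by auto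
      moreover have "D \<inter> {Sup D} \<in> sets borel"
        by (cases "Sup D \<in> D") auto
      ultimately show ?thesis by (metis sets.Un lessThan_borel)
    qed simp
  qed
  then show "{x \<in> space borel. y < g x} \<in> sets borel" by (simp add: D_def)
qed

lemma countable_imp_negligible: "countable C \<Longrightarrow> negligible (C :: 'a::euclidean_space set)"
  using negligible_countable_Union[of "(\<lambda>x. {x}) ` C"] by auto

lemma nn_integral_indicator_cong_two_points:
  fixes f :: "real \<Rightarrow> ennreal"
  assumes "\<And>x. x \<noteq> x1 \<Longrightarrow> x \<noteq> x2 \<Longrightarrow> indicator A x = (indicator B x :: ennreal)"
  shows "(\<integral>\<^sup>+x. f x * indicator A x \<partial>lborel) = (\<integral>\<^sup>+x. f x * indicator B x \<partial>lborel)"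
proof (rule nn_integral_cong_AE)
  have "AE x in lborel. x \<noteq> x1" "AE x in lborel. x \<noteq> x2" by (rule AE_lborel_singleton)+
  then show "AE x in lborel. f x * indicator A x = f x * indicator B x"
    by eventually_elim (simp add: assms)
qed

lemma nn_integral_powr_Ioo_0:
  fixes e c :: real
  assumes "-1 < e" "0 \<le> c"
  shows "(\<integral>\<^sup>+x. ennreal (x powr e) * indicator {0<..<c} x \<partial>lborel) = ennreal (c powr (e+1) / (e+1))"
proof -
  have "(\<integral>\<^sup>+x. ennreal (x powr e) * indicator {0..c} x \<partial>lborel) = ennreal (c powr (e+1) / (e+1))"
    by (rule nn_integral_has_integral_lebesgue'[OF _ has_integral_powr_from_0[OF assms]]) simp
  moreover have "(\<integral>\<^sup>+x. ennreal (x powr e) * indicator {0<..<c} x \<partial>lborel) =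
      (\<integral>\<^sup>+x. ennreal (x powr e) * indicator {0..c} x \<partial>lborel)"
    by (rule nn_integral_indicator_cong_two_points[of 0 c]) (auto simp: indicator_def)
  ultimately show ?thesis by simp
qed

lemma nn_integral_powr_Ioi:
  fixes e a :: real
  assumes "e < -1" "0 < a"
  shows "(\<integral>\<^sup>+x. ennreal (x powr e) * indicator {a<..} x \<partial>lborel) = ennreal (-(a powr (e+1)) / (e+1))"
proof -
  have "(\<integral>\<^sup>+x. ennreal (x powr e) * indicator {a..} x \<partial>lborel) = ennreal (-(a powr (e+1)) / (e+1))"
    by (rule nn_integral_has_integral_lebesgue'[OF _ has_integral_powr_to_inf[OF assms]]) simp
  moreover have "(\<integral>\<^sup>+x. ennreal (x powr e) * indicator {a<..} x \<partial>lborel) =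
      (\<integral>\<^sup>+x. ennreal (x powr e) * indicator {a..} x \<partial>lborel)"
    by (rule nn_integral_indicator_cong_two_points[of a a]) (auto simp: indicator_def)
  ultimately show ?thesis by simp
qed

lemma Beta_real_pos: "0 < x \<Longrightarrow> 0 < y \<Longrightarrow> 0 < Beta x (y::real)"
  by (simp add: Beta_def Gamma_real_pos)

lemma nn_integral_Beta:
  fixes x y u :: real
  assumes "x > 0" "y > 0" "u > 0"
  shows "(\<integral>\<^sup>+t. ennreal (t powr (x-1) * (u-t) powr (y-1)) * indicator {0<..<u} t \<partial>lborel)
          = ennreal (u powr (x+y-1) * Beta x y)"
proof -
  have B: "(\<integral>\<^sup>+s. ennreal (s powr (x-1) * (1-s) powr (y-1)) * indicator {0..1} s \<partial>lborel) = ennreal (Beta x y)"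
    by (rule nn_integral_has_integral_lebesgue'[OF _ has_integral_Beta_real[OF assms(1,2)]]) simp
  have B': "(\<integral>\<^sup>+s. ennreal (s powr (x-1) * (1-s) powr (y-1)) * indicator {0<..<1} s \<partial>lborel) = ennreal (Beta x y)"
    unfolding B[symmetric] by (rule nn_integral_indicator_cong_two_points[of 0 1]) (auto simp: indicator_def)
  have "(\<integral>\<^sup>+t. ennreal (t powr (x-1) * (u-t) powr (y-1)) * indicator {0<..<u} t \<partial>lborel)
      = ennreal \<bar>u\<bar> * (\<integral>\<^sup>+s. ennreal ((0 + u * s) powr (x-1) * (u-(0 + u * s)) powr (y-1)) * indicator {0<..<u} (0 + u * s) \<partial>lborel)"
    by (rule nn_integral_real_affine) (use assms in auto)
  also have "(\<lambda>s. ennreal ((0 + u * s) powr (x-1) * (u-(0 + u * s)) powr (y-1)) * indicator {0<..<u} (0 + u * s))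
      = (\<lambda>s. ennreal (u powr (x+y-2)) * (ennreal (s powr (x-1) * (1-s) powr (y-1)) * indicator {0<..<1} s))"
  proof
    fix s
    show "ennreal ((0 + u * s) powr (x-1) * (u-(0 + u * s)) powr (y-1)) * indicator {0<..<u} (0 + u * s)
      = ennreal (u powr (x+y-2)) * (ennreal (s powr (x-1) * (1-s) powr (y-1)) * indicator {0<..<1} s)"
    proof (cases "0 < s \<and> s < 1")
      case True
      have "(u * s) powr (x-1) * (u - u * s) powr (y-1) = u powr (x+y-2) * (s powr (x-1) * (1-s) powr (y-1))"
      proof -
        have "u - u * s = u * (1-s)" by (simp add: algebra_simps)
        then have "(u * s) powr (x-1) * (u - u * s) powr (y-1) = u powr (x-1) * s powr (x-1) * (u powr (y-1) * (1-s) powr (y-1))"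
          using True assms by (simp add: powr_mult)
        also have "\<dots> = (u powr (x-1) * u powr (y-1)) * (s powr (x-1) * (1-s) powr (y-1))" by (simp add: mult_ac)
        also have "u powr (x-1) * u powr (y-1) = u powr (x+y-2)" using assms by (simp add: powr_add[symmetric])
        finally show ?thesis .
      qed
      moreover have "0 < u * s \<and> u * s < u" using True assms by (simp add: mult_less_cancel_left1)
      ultimately show ?thesis using True assms by (simp add: ennreal_mult[symmetric] del: ennreal_mult)
    next
      case False
      have "\<not> (0 < u * s \<and> u * s < u)" using False assms
        by (auto simp: zero_less_mult_iff mult_less_cancel_left1)
      then show ?thesis using False by simp
    qed
  qed
  also have "(\<integral>\<^sup>+s. ennreal (u powr (x+y-2)) * (ennreal (s powr (x-1) * (1-s) powr (y-1)) * indicator {0<..<1} s) \<partial>lborel)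
      = ennreal (u powr (x+y-2)) * ennreal (Beta x y)"
    by (subst nn_integral_cmult) (auto simp: B')
  also have "ennreal \<bar>u\<bar> * (ennreal (u powr (x+y-2)) * ennreal (Beta x y)) = ennreal (u powr (x+y-1) * Beta x y)"
  proof -
    have "u * u powr (x+y-2) = u powr (x+y-1)" using assms by (simp add: powr_add[symmetric] powr_mult_base)
    moreover have "Beta x y \<ge> 0" using assms by (simp add: Beta_def Gamma_real_pos less_imp_le)
    ultimately show ?thesis using assms by (simp add: ennreal_mult[symmetric] mult.assoc[symmetric] del: ennreal_mult)
  qed
  finally show ?thesis .
qed

lemma nn_integral_Ioi_SUP:
  fixes f :: "real \<Rightarrow> ennreal"
  assumes [measurable]: "f \<in> borel_measurable borel"
  shows "(\<integral>\<^sup>+u. f u * indicator {t<..} u \<partial>lborel)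
    = (SUP n. \<integral>\<^sup>+u. f u * indicator {t<..<t + real (Suc n)} u \<partial>lborel)"
proof -
  have inc: "incseq (\<lambda>n u. f u * indicator {t<..<t + real (Suc n)} u)"
    by (intro incseq_SucI le_funI mult_left_mono) (auto simp: indicator_def)
  have "(SUP n. f u * indicator {t<..<t + real (Suc n)} u) = f u * indicator {t<..} u" for u
  proof (cases "t < u")
    case True
    obtain n :: nat where "u - t < real n" using reals_Archimedean2 by blast
    then have "f u * indicator {t<..} u \<le> (SUP n. f u * indicator {t<..<t + real (Suc n)} u)"
      using True by (intro SUP_upper2[of n]) auto
    moreover have "(SUP n. f u * indicator {t<..<t + real (Suc n)} u) \<le> f u * indicator {t<..} u"
      by (intro SUP_least mult_left_mono) (auto simp: indicator_def)
    ultimately show ?thesis by (rule antisym[rotated])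
  qed simp
  then show ?thesis
    using nn_integral_monotone_convergence_SUP[OF inc] by simp
qed

lemma nn_integral_lborel_shift:
  fixes f :: "real \<Rightarrow> ennreal"
  assumes "f \<in> borel_measurable borel"
  shows "(\<integral>\<^sup>+u. f u \<partial>lborel) = (\<integral>\<^sup>+x. f (t + x) \<partial>lborel)"
  using nn_integral_real_affine[OF assms, of 1 t] by simp

lemma nn_integral_Ioi_swap:
  fixes f :: "real \<Rightarrow> real \<Rightarrow> ennreal"
  assumes [measurable]: "case_prod f \<in> borel_measurable (lborel \<Otimes>\<^sub>M lborel)"
  shows "(\<integral>\<^sup>+t. (\<integral>\<^sup>+u. f t u * indicator {t<..} u \<partial>lborel) * indicator {0<..} t \<partial>lborel)
       = (\<integral>\<^sup>+u. (\<integral>\<^sup>+t. f t u * indicator {0<..<u} t \<partial>lborel) * indicator {0<..} u \<partial>lborel)"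
proof -
  have i1: "(\<lambda>x::real\<times>real. indicator {fst x<..} (snd x) :: ennreal) = (\<lambda>x. if fst x < snd x then 1 else 0)"
    by (auto simp: indicator_def fun_eq_iff)
  have i2: "(\<lambda>x::real\<times>real. indicator {0<..} (fst x) :: ennreal) = (\<lambda>x. if 0 < fst x then 1 else 0)"
    by (auto simp: indicator_def fun_eq_iff)
  have [measurable]: "(\<lambda>x::real\<times>real. indicator {fst x<..} (snd x) :: ennreal) \<in> borel_measurable (lborel \<Otimes>\<^sub>M lborel)"
    unfolding i1 by measurable
  have [measurable]: "(\<lambda>x::real\<times>real. indicator {0<..} (fst x) :: ennreal) \<in> borel_measurable (lborel \<Otimes>\<^sub>M lborel)"
    unfolding i2 by measurable
  have "(\<integral>\<^sup>+t. (\<integral>\<^sup>+u. f t u * indicator {t<..} u \<partial>lborel) * indicator {0<..} t \<partial>lborel)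
      = (\<integral>\<^sup>+t. (\<integral>\<^sup>+u. f t u * indicator {t<..} u * indicator {0<..} t \<partial>lborel) \<partial>lborel)"
    by (subst nn_integral_multc) auto
  also have "\<dots> = (\<integral>\<^sup>+u. (\<integral>\<^sup>+t. f t u * indicator {t<..} u * indicator {0<..} t \<partial>lborel) \<partial>lborel)"
    by (rule lborel_pair.Fubini'[symmetric]) measurable
  also have "\<dots> = (\<integral>\<^sup>+u. (\<integral>\<^sup>+t. f t u * indicator {0<..<u} t * indicator {0<..} u \<partial>lborel) \<partial>lborel)"
    by (intro nn_integral_cong) (auto simp: indicator_def)
  also have "\<dots> = (\<integral>\<^sup>+u. (\<integral>\<^sup>+t. f t u * indicator {0<..<u} t \<partial>lborel) * indicator {0<..} u \<partial>lborel)"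
    by (subst nn_integral_multc) auto
  finally show ?thesis .
qed

lemma nn_integral_Ioi_split:
  fixes F :: "real \<Rightarrow> ennreal"
  assumes [measurable]: "F \<in> borel_measurable borel"
  shows "(\<integral>\<^sup>+t. F t * indicator {0<..} t \<partial>lborel)
    = (\<integral>\<^sup>+t. F t * indicator {0<..<1} t \<partial>lborel) + (\<integral>\<^sup>+t. F t * indicator {1<..} t \<partial>lborel)"
proof -
  have "(\<integral>\<^sup>+t. F t * indicator {0<..} t \<partial>lborel) = (\<integral>\<^sup>+t. F t * indicator ({0<..<1} \<union> {1<..}) t \<partial>lborel)"
    by (rule nn_integral_indicator_cong_two_points[of 1 1]) (auto simp: indicator_def)
  also have "\<dots> = (\<integral>\<^sup>+t. F t * indicator {0<..<1} t + F t * indicator {1<..} t \<partial>lborel)"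
    by (intro nn_integral_cong) (auto simp: indicator_def)
  also have "\<dots> = (\<integral>\<^sup>+t. F t * indicator {0<..<1} t \<partial>lborel) + (\<integral>\<^sup>+t. F t * indicator {1<..} t \<partial>lborel)"
    by (rule nn_integral_add) auto
  finally show ?thesis .
qed

lemma nn_integral_Ioi_kernel:
  fixes K :: "real \<Rightarrow> real \<Rightarrow> real" and \<phi> :: "real \<Rightarrow> ennreal"
  assumes [measurable]: "case_prod K \<in> borel_measurable (lborel \<Otimes>\<^sub>M lborel)" "\<phi> \<in> borel_measurable borel"
    and inner: "\<And>u. 0 < u \<Longrightarrow> (\<integral>\<^sup>+t. ennreal (K t u) * indicator {0<..<u} t \<partial>lborel) = ennreal (\<kappa> u)"
  shows "(\<integral>\<^sup>+t. (\<integral>\<^sup>+u. ennreal (K t u) * \<phi> u * indicator {t<..} u \<partial>lborel) * indicator {0<..} t \<partial>lborel)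
       = (\<integral>\<^sup>+u. ennreal (\<kappa> u) * \<phi> u * indicator {0<..} u \<partial>lborel)"
proof -
  have [measurable]: "(\<lambda>x. \<phi> (snd x)) \<in> borel_measurable (lborel \<Otimes>\<^sub>M lborel)"
    by measurable
  have "(\<integral>\<^sup>+t. (\<integral>\<^sup>+u. ennreal (K t u) * \<phi> u * indicator {t<..} u \<partial>lborel) * indicator {0<..} t \<partial>lborel)
      = (\<integral>\<^sup>+u. (\<integral>\<^sup>+t. ennreal (K t u) * \<phi> u * indicator {0<..<u} t \<partial>lborel) * indicator {0<..} u \<partial>lborel)"
    by (rule nn_integral_Ioi_swap) measurable
  also have "\<dots> = (\<integral>\<^sup>+u. ennreal (\<kappa> u) * \<phi> u * indicator {0<..} u \<partial>lborel)"
  proof (intro nn_integral_cong)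
    fix u
    have "(\<integral>\<^sup>+t. ennreal (K t u) * \<phi> u * indicator {0<..<u} t \<partial>lborel)
        = (\<integral>\<^sup>+t. ennreal (K t u) * indicator {0<..<u} t \<partial>lborel) * \<phi> u"
      by (subst nn_integral_multc[symmetric]) (auto intro!: nn_integral_cong simp: mult_ac)
    then show "(\<integral>\<^sup>+t. ennreal (K t u) * \<phi> u * indicator {0<..<u} t \<partial>lborel) * indicator {0<..} u
        = ennreal (\<kappa> u) * \<phi> u * indicator {0<..} u"
      using inner[of u] by (cases "0 < u") auto
  qed
  finally show ?thesis .
qed

section \<open>The power of the integral of a decreasing function\<close>

text \<open>For decreasing \<open>h \<ge> 0\<close> with primitive \<open>F\<close>, the chain rule gives
  \<open>(\<integral>\<^sub>0\<^sup>b h)\<^sup>q = \<integral>\<^sub>0\<^sup>b q F\<^sup>q\<^sup>-\<^sup>1 h\<close>, and \<open>F x \<ge> x h x\<close> compares this with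
  \<open>\<integral>\<^sub>0\<^sup>b q x\<^sup>q\<^sup>-\<^sup>1 h\<^sup>q\<close> in either direction, depending on the sign of \<open>q - 1\<close>.
  The chain rule is applied by change of variables on the set of points where \<open>h\<close> is positive
  and continuous; \<open>F\<close> is injective there and its image has negligible complement.\<close>

locale decreasing_density =
  fixes h :: "real \<Rightarrow> real" and b :: real
  assumes antimono: "antimono h" and nonneg: "\<And>x. 0 \<le> h x" and b_pos: "0 < b"
begin

definition F where "F x = integral {0..x} h"
definition I where "I = integral {0..b} h"
definition jumps where "jumps = {x\<in>{0..b}. \<not> continuous (at x within {0..b}) h}"
definition regular where "regular = {x\<in>{0<..<b}. 0 < h x} - jumps"

lemma antimonoD: "x \<le> y \<Longrightarrow> h y \<le> h x"
  using antimono unfolding antimono_def by blast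

lemma measurable [measurable]: "h \<in> borel_measurable borel"
  by (rule antimono_borel_measurable[OF antimono])

lemma integrable: "h integrable_on {u..v}"
proof -
  have "mono_on {u..v} (\<lambda>x. - h x)" by (auto simp: mono_on_def antimonoD)
  then have "(\<lambda>x. - h x) integrable_on {u..v}" by (rule integrable_on_mono_on)
  then show ?thesis using integrable_neg by fastforce
qed

lemma countable_jumps: "countable jumps"
proof -
  have "mono_on {0..b} (\<lambda>x. - h x)" by (auto simp: mono_on_def antimonoD)
  from mono_on_ctble_discont[OF this]
  have "countable {x\<in>{0..b}. \<not> continuous (at x within {0..b}) (\<lambda>x. - h x)}" .
  moreover have "continuous (at x within {0..b}) (\<lambda>x. - h x) \<longleftrightarrow> continuous (at x within {0..b}) h" for x
    using continuous_minus[of "at x within {0..b}" h] continuous_minus[of "at x within {0..b}" "\<lambda>x. - h x"]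
    by auto
  ultimately show ?thesis unfolding jumps_def by simp
qed

lemma regular_subset: "regular \<subseteq> {0<..<b}"
  unfolding regular_def by auto

lemma regular_lebesgue: "regular \<in> sets lebesgue"
proof -
  have "{x\<in>space borel. 0 < h x} \<in> sets borel"
    using measurable by (simp add: borel_measurable_iff_greater)
  then have "{0<..<b} \<inter> {x\<in>space borel. 0 < h x} \<in> sets borel" by auto
  then have "{x\<in>{0<..<b}. 0 < h x} \<in> sets lebesgue" by (simp add: Int_def)
  moreover have "jumps \<in> sets lebesgue"
    using countable_jumps by (intro negligible_imp_sets countable_imp_negligible)
  ultimately show ?thesis unfolding regular_def by auto
qed

lemma F_split: "0 \<le> x \<Longrightarrow> x \<le> y \<Longrightarrow> F y = F x + integral {x..y} h"
  unfolding F_def using Henstock_Kurzweil_Integration.integral_combine[where a=0 and c=x and b=y and f=h] integrable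
  by simp

lemma integral_h_nonneg: "0 \<le> integral {x..y} h"
  by (rule integral_nonneg[OF integrable nonneg])

lemma integral_ge_length_mult:
  assumes "x \<le> y"
  shows "(y - x) * h y \<le> integral {x..y} h"
proof -
  have "integral {x..y} (\<lambda>_. h y) \<le> integral {x..y} h"
    by (rule integral_le) (auto intro: integrable antimonoD)
  then show ?thesis using assms by simp
qed

lemma F_ge: "0 \<le> x \<Longrightarrow> x * h x \<le> F x"
  using integral_ge_length_mult[of 0 x] unfolding F_def by simp

lemma F_0: "F 0 = 0" unfolding F_def by simp

lemma F_b: "F b = I" unfolding F_def I_def by simp

lemma I_nonneg: "0 \<le> I"
  unfolding I_def by (rule integral_h_nonneg)

lemma F_mono: "0 \<le> x \<Longrightarrow> x \<le> y \<Longrightarrow> F x \<le> F y"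
  using F_split integral_h_nonneg by (metis le_add_same_cancel1)

lemma F_eq_I_if_zero:
  assumes "0 \<le> x" "x \<le> b" "h x = 0"
  shows "F x = I"
proof -
  have "integral {x..b} h \<le> integral {x..b} (\<lambda>_. 0)"
  proof (rule integral_le)
    fix t assume "t \<in> {x..b}"
    then show "h t \<le> 0" using assms antimonoD[of x t] by simp
  qed (auto intro: integrable)
  then have "integral {x..b} h = 0" using integral_h_nonneg[of x b] by simp
  then show ?thesis using F_split[of x b] assms F_b by simp
qed

lemma F_has_derivative:
  assumes "x \<in> regular"
  shows "(F has_field_derivative h x) (at x within regular)"
proof -
  have x: "x \<in> {0..b} - {}" "continuous (at x within ({0..b} - {})) h"
    using assms unfolding regular_def jumps_def by auto
  have "(F has_vector_derivative h x) (at x within ({0..b} - {}))"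
    unfolding F_def by (rule integral_has_vector_derivative_continuous_at[OF integrable x(1) _ x(2)]) simp
  then have "(F has_vector_derivative h x) (at x within regular)"
    by (rule has_vector_derivative_within_subset) (use regular_subset in auto)
  then show ?thesis by (simp add: has_real_derivative_iff_has_vector_derivative)
qed

lemma inj_on_F: "inj_on F regular"
proof -
  have "F x < F y" if "x \<in> regular" "y \<in> regular" "x < y" for x y
  proof -
    have "0 < h y" "0 < x" using that unfolding regular_def by auto
    then have "0 < (y - x) * h y" using that by simp
    also have "\<dots> \<le> integral {x..y} h" using integral_ge_length_mult that by simp
    finally show ?thesis using F_split[of x y] \<open>0 < x\<close> that by simp
  qed
  then show ?thesis unfolding inj_on_def by (metis linorder_neq_iff order.irrefl)
qed

lemma F_image_regular: "F ` regular \<subseteq> {0<..I}"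
proof
  fix y assume "y \<in> F ` regular"
  then obtain x where x: "x \<in> regular" "y = F x" by auto
  then have "0 < x" "x < b" "0 < h x" unfolding regular_def by auto
  then have "0 < x * h x" by simp
  also have "\<dots> \<le> F x" using F_ge \<open>0 < x\<close> by simp
  finally have "0 < y" using x by simp
  moreover have "y \<le> I" using F_mono[of x b] \<open>0 < x\<close> \<open>x < b\<close> x F_b by simp
  ultimately show "y \<in> {0<..I}" by simp
qed

lemma F_image_jumps: "{0<..<I} - F ` regular \<subseteq> F ` jumps"
proof
  fix y assume y: "y \<in> {0<..<I} - F ` regular"
  obtain x where x: "0 \<le> x" "x \<le> b" "F x = y"
    using IVT'[of F 0 y b] indefinite_integral_continuous_1[OF integrable] F_0 F_b y b_pos
    unfolding F_def by auto
  have "x \<noteq> 0" "x \<noteq> b" "h x \<noteq> 0" using x y F_0 F_b F_eq_I_if_zero[of x] by auto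
  then have "x \<in> jumps" using y x nonneg[of x] unfolding regular_def by auto
  then show "y \<in> F ` jumps" using x by auto
qed

lemma nn_integral_chain_rule:
  assumes q: "0 < q"
  shows "(\<integral>\<^sup>+x. ennreal (h x * (q * F x powr (q-1))) * indicator regular x \<partial>lborel) = ennreal (I powr q)"
proof -
  define \<phi> where "\<phi> = (\<lambda>s::real. q * s powr (q-1))"
  have "((\<lambda>s. s powr (q-1)) has_integral (I powr (q-1+1) / (q-1+1))) {0..I}"
    by (rule has_integral_powr_from_0) (use q I_nonneg in auto)
  then have "((\<lambda>s. q * s powr (q-1)) has_integral (q * (I powr q / q))) {0..I}"
    by (intro has_integral_mult_right) simp
  then have i1: "(\<phi> has_integral I powr q) {0..I}" using q by (simp add: \<phi>_def)
  have neg: "negligible (({0..I} - F ` regular) \<union> (F ` regular - {0..I}))"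
  proof -
    have "({0..I} - F ` regular) \<union> (F ` regular - {0..I}) \<subseteq> insert 0 (insert I (F ` jumps))"
    proof
      fix x assume x: "x \<in> ({0..I} - F ` regular) \<union> (F ` regular - {0..I})"
      show "x \<in> insert 0 (insert I (F ` jumps))"
      proof (cases "x = 0 \<or> x = I")
        case False
        then have "x \<in> {0<..<I} - F ` regular" using x F_image_regular by auto
        then show ?thesis using F_image_jumps by auto
      qed auto
    qed
    moreover have "negligible (insert 0 (insert I (F ` jumps)))"
      using countable_jumps by (simp add: countable_imp_negligible)
    ultimately show ?thesis by (meson negligible_subset)
  qed
  have i2: "(\<phi> has_integral I powr q) (F ` regular)"
  proof -
    have n1: "negligible {x \<in> {0..I} - F ` regular. \<phi> x \<noteq> 0}" by (rule negligible_subset[OF neg]) auto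
    have n2: "negligible {x \<in> F ` regular - {0..I}. \<phi> x \<noteq> 0}" by (rule negligible_subset[OF neg]) auto
    show ?thesis using has_integral_spike_set_eq[OF n1 n2] i1 by simp
  qed
  have nn\<phi>: "x \<in> F ` regular \<Longrightarrow> 0 \<le> \<phi> x" for x using q by (simp add: \<phi>_def)
  have a2: "\<phi> absolutely_integrable_on F ` regular"
    using i2 nn\<phi> by (intro nonnegative_absolutely_integrable_1) (auto simp: has_integral_integrable)
  have "(\<lambda>x. \<bar>h x\<bar> *\<^sub>R \<phi> (F x)) absolutely_integrable_on regular \<and> integral regular (\<lambda>x. \<bar>h x\<bar> *\<^sub>R \<phi> (F x)) = I powr q"
    using has_absolute_integral_change_of_variables_real[OF regular_lebesgue F_has_derivative inj_on_F, of \<phi> "I powr q"]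
      a2 i2 by (simp add: integral_unique)
  then have "((\<lambda>x. h x * \<phi> (F x)) has_integral I powr q) regular"
    using nonneg by (auto simp: absolutely_integrable_on_def dest: integrable_integral)
  then have "(\<integral>\<^sup>+x. ennreal (h x * \<phi> (F x)) * indicator regular x \<partial>lborel) = ennreal (I powr q)"
    by (rule nn_integral_has_integral_lebesgue'[rotated]) (use nonneg q in \<open>simp add: \<phi>_def\<close>)
  then show ?thesis by (simp add: \<phi>_def)
qed

lemma nn_integral_interval_eq_regular:
  assumes q: "0 < q"
  shows "(\<integral>\<^sup>+x. ennreal (q * x powr (q-1) * h x powr q) * indicator {0<..<b} x \<partial>lborel)
       = (\<integral>\<^sup>+x. ennreal (q * x powr (q-1) * h x powr q) * indicator regular x \<partial>lborel)"
proof (rule nn_integral_cong_AE)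
  have "AE x in lborel. x \<notin> jumps"
    by (rule AE_not_in[OF countable_imp_null_set_lborel[OF countable_jumps]])
  then show "AE x in lborel. ennreal (q * x powr (q-1) * h x powr q) * indicator {0<..<b} x
       = ennreal (q * x powr (q-1) * h x powr q) * indicator regular x"
  proof eventually_elim
    case (elim x)
    then have "h x = 0" if "x \<in> {0<..<b}" "x \<notin> regular"
      using that nonneg[of x] unfolding regular_def by auto
    then show ?case using q regular_subset by (auto simp: indicator_def)
  qed
qed

lemma powr_rearrange:
  fixes x y q :: real
  assumes "0 < x" "0 < y"
  shows "x powr (q-1) * y powr q = y * (x * y) powr (q-1)"
proof -
  have "(x*y) powr (q-1) = x powr (q-1) * y powr (q-1)" using assms by (simp add: powr_mult)
  moreover have "y * y powr (q-1) = y powr q" using assms by (simp add: powr_mult_base)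
  ultimately show ?thesis by (simp add: mult_ac)
qed

lemma weighted_powr_integral_le:
  assumes q: "1 \<le> q"
  shows "(\<integral>\<^sup>+x. ennreal (q * x powr (q-1) * h x powr q) * indicator {0<..<b} x \<partial>lborel) \<le> ennreal (I powr q)"
proof -
  have "q * x powr (q-1) * h x powr q \<le> h x * (q * F x powr (q-1))" if "x \<in> regular" for x
  proof -
    have x: "0 < x" "0 < h x" using that unfolding regular_def by auto
    have "(x * h x) powr (q-1) \<le> F x powr (q-1)"
      using x q F_ge[of x] by (intro powr_mono2) auto
    then show ?thesis using powr_rearrange[OF x, of q] x q by (simp add: mult_ac mult_left_mono)
  qed
  then have "(\<integral>\<^sup>+x. ennreal (q * x powr (q-1) * h x powr q) * indicator regular x \<partial>lborel)
      \<le> (\<integral>\<^sup>+x. ennreal (h x * (q * F x powr (q-1))) * indicator regular x \<partial>lborel)"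
    by (intro nn_integral_mono) (auto simp: indicator_def intro: ennreal_leI)
  then show ?thesis
    using q nn_integral_interval_eq_regular nn_integral_chain_rule by simp
qed

lemma weighted_powr_integral_ge:
  assumes q: "0 < q" "q \<le> 1"
  shows "ennreal (I powr q) \<le> (\<integral>\<^sup>+x. ennreal (q * x powr (q-1) * h x powr q) * indicator {0<..<b} x \<partial>lborel)"
proof -
  have "h x * (q * F x powr (q-1)) \<le> q * x powr (q-1) * h x powr q" if "x \<in> regular" for x
  proof -
    have x: "0 < x" "0 < h x" using that unfolding regular_def by auto
    have "F x powr (q-1) \<le> (x * h x) powr (q-1)"
      using x q F_ge[of x] by (intro powr_mono2') auto
    then show ?thesis using powr_rearrange[OF x, of q] x q by (simp add: mult_ac mult_left_mono)
  qed
  then have "(\<integral>\<^sup>+x. ennreal (h x * (q * F x powr (q-1))) * indicator regular x \<partial>lborel)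
      \<le> (\<integral>\<^sup>+x. ennreal (q * x powr (q-1) * h x powr q) * indicator regular x \<partial>lborel)"
    by (intro nn_integral_mono) (auto simp: indicator_def intro: ennreal_leI)
  then show ?thesis
    using q nn_integral_interval_eq_regular nn_integral_chain_rule by simp
qed

lemma ennreal_I_eq: "ennreal I = (\<integral>\<^sup>+x. ennreal (h x) * indicator {0<..<b} x \<partial>lborel)"
proof -
  have "(h has_integral I) {0..b}" unfolding I_def using integrable by (rule integrable_integral)
  then have "(\<integral>\<^sup>+x. ennreal (h x) * indicator {0..b} x \<partial>lborel) = ennreal I"
    by (rule nn_integral_has_integral_lebesgue'[rotated]) (use nonneg in auto)
  moreover have "(\<integral>\<^sup>+x. ennreal (h x) * indicator {0<..<b} x \<partial>lborel)
      = (\<integral>\<^sup>+x. ennreal (h x) * indicator {0..b} x \<partial>lborel)"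
    by (rule nn_integral_indicator_cong_two_points[of 0 b]) (auto simp: indicator_def)
  ultimately show ?thesis by simp
qed

end

text \<open>The same comparison for the tail \<open>\<integral>\<^sub>t\<^sup>\<infinity> g\<close> of a decreasing \<open>g\<close>, obtained from
  the bounded intervals \<open>(t, t + n)\<close> by monotone convergence.\<close>

locale decreasing_tail =
  fixes g :: "real \<Rightarrow> ennreal" and t :: real
  assumes antimono: "antimono g" and finite: "\<And>u. 0 < u \<Longrightarrow> g u \<noteq> \<infinity>" and t_pos: "0 < t"
begin

definition h where "h x = enn2real (g (t + max 0 x))"

lemma measurable [measurable]: "g \<in> borel_measurable borel"
  by (rule antimono_borel_measurable[OF antimono])

lemma antimono_h: "antimono h"
proof (rule antimonoI)
  fix x y :: real assume "x \<le> y"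
  then have "g (t + max 0 y) \<le> g (t + max 0 x)" using antimono unfolding antimono_def by auto
  moreover have "g (t + max 0 x) \<noteq> \<infinity>" using finite t_pos by (simp add: add_pos_nonneg)
  ultimately show "h y \<le> h x" unfolding h_def by (simp add: enn2real_mono top.not_eq_extremum)
qed

lemma decreasing_density: "0 < b \<Longrightarrow> decreasing_density h b"
  by unfold_locales (auto simp: antimono_h h_def)

lemma g_shift_eq: "0 < x \<Longrightarrow> g (t + x) = ennreal (h x)"
  using finite[of "t+x"] t_pos unfolding h_def by (simp add: ennreal_enn2real_if)

lemma ennreal_I_eq_shift:
  assumes "0 < b"
  shows "ennreal (decreasing_density.I h b) = (\<integral>\<^sup>+u. g u * indicator {t<..<t+b} u \<partial>lborel)"
proof -
  interpret decreasing_density h b by (rule decreasing_density[OF assms])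
  have "(\<integral>\<^sup>+u. g u * indicator {t<..<t+b} u \<partial>lborel)
      = (\<integral>\<^sup>+x. g (t + x) * indicator {t<..<t+b} (t + x) \<partial>lborel)"
    by (rule nn_integral_lborel_shift) simp
  also have "\<dots> = (\<integral>\<^sup>+x. ennreal (h x) * indicator {0<..<b} x \<partial>lborel)"
    by (intro nn_integral_cong) (auto simp: indicator_def g_shift_eq)
  finally show ?thesis using ennreal_I_eq by simp
qed

lemma weighted_powr_integral_shift:
  assumes "0 < q"
  shows "(\<integral>\<^sup>+x. ennreal (q * x powr (q-1) * h x powr q) * indicator {0<..<b} x \<partial>lborel)
    = (\<integral>\<^sup>+u. ennreal (q * (u-t) powr (q-1)) * enn_powr (g u) q * indicator {t<..<t+b} u \<partial>lborel)"
proof -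
  have "(\<integral>\<^sup>+u. ennreal (q * (u-t) powr (q-1)) * enn_powr (g u) q * indicator {t<..<t+b} u \<partial>lborel)
     = (\<integral>\<^sup>+x. ennreal (q * (t+x-t) powr (q-1)) * enn_powr (g (t+x)) q * indicator {t<..<t+b} (t+x) \<partial>lborel)"
    by (rule nn_integral_lborel_shift) simp
  also have "\<dots> = (\<integral>\<^sup>+x. ennreal (q * x powr (q-1) * h x powr q) * indicator {0<..<b} x \<partial>lborel)"
  proof (intro nn_integral_cong)
    fix x
    have "0 \<le> h x" unfolding h_def by simp
    then show "ennreal (q * (t+x-t) powr (q-1)) * enn_powr (g (t+x)) q * indicator {t<..<t+b} (t+x)
      = ennreal (q * x powr (q-1) * h x powr q) * indicator {0<..<b} x"
      using g_shift_eq[of x] assms by (cases "0 < x \<and> x < b") (auto simp: indicator_def ennreal_mult)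
  qed
  finally show ?thesis by simp
qed

lemma tail_weighted_powr_le:
  assumes q: "1 \<le> q"
  shows "(\<integral>\<^sup>+u. ennreal (q * (u-t) powr (q-1)) * enn_powr (g u) q * indicator {t<..} u \<partial>lborel)
    \<le> enn_powr (\<integral>\<^sup>+u. g u * indicator {t<..} u \<partial>lborel) q"
proof -
  have SUP: "(\<integral>\<^sup>+u. ennreal (q * (u-t) powr (q-1)) * enn_powr (g u) q * indicator {t<..} u \<partial>lborel)
    = (SUP n. \<integral>\<^sup>+u. ennreal (q * (u-t) powr (q-1)) * enn_powr (g u) q * indicator {t<..<t + real (Suc n)} u \<partial>lborel)"
    by (rule nn_integral_Ioi_SUP) simp
  show ?thesis
    unfolding SUP
  proof (rule SUP_least)
    fix n
    define b where "b = real (Suc n)"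
    have b: "0 < b" by (simp add: b_def)
    interpret decreasing_density h b by (rule decreasing_density[OF b])
    have "(\<integral>\<^sup>+u. (ennreal (q * (u-t) powr (q-1)) * enn_powr (g u) q) * indicator {t<..<t + b} u \<partial>lborel)
        = (\<integral>\<^sup>+x. ennreal (q * x powr (q-1) * h x powr q) * indicator {0<..<b} x \<partial>lborel)"
      using weighted_powr_integral_shift[of q b] q by simp
    also have "\<dots> \<le> ennreal (I powr q)" by (rule weighted_powr_integral_le[OF q])
    also have "\<dots> = enn_powr (ennreal I) q" using I_nonneg by simp
    also have "\<dots> \<le> enn_powr (\<integral>\<^sup>+u. g u * indicator {t<..} u \<partial>lborel) q"
    proof (intro enn_powr_mono)
      show "ennreal I \<le> (\<integral>\<^sup>+u. g u * indicator {t<..} u \<partial>lborel)"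
        unfolding ennreal_I_eq_shift[OF b] by (intro nn_integral_mono mult_left_mono) (auto simp: indicator_def)
    qed (use q in simp)
    finally show "(\<integral>\<^sup>+u. (ennreal (q * (u-t) powr (q-1)) * enn_powr (g u) q)
        * indicator {t<..<t + real (Suc n)} u \<partial>lborel) \<le> enn_powr (\<integral>\<^sup>+u. g u * indicator {t<..} u \<partial>lborel) q"
      by (simp add: b_def)
  qed
qed

lemma tail_weighted_powr_ge:
  assumes q: "0 < q" "q \<le> 1"
  shows "enn_powr (\<integral>\<^sup>+u. g u * indicator {t<..} u \<partial>lborel) q
    \<le> (\<integral>\<^sup>+u. ennreal (q * (u-t) powr (q-1)) * enn_powr (g u) q * indicator {t<..} u \<partial>lborel)"
    (is "enn_powr ?H q \<le> ?R")
proof -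
  have "?H \<le> enn_powr ?R (1/q)"
    unfolding nn_integral_Ioi_SUP[OF measurable]
  proof (rule SUP_least)
    fix n
    define b where "b = real (Suc n)"
    have b: "0 < b" by (simp add: b_def)
    interpret decreasing_density h b by (rule decreasing_density[OF b])
    have "enn_powr (ennreal I) q = ennreal (I powr q)" using I_nonneg by simp
    also have "\<dots> \<le> (\<integral>\<^sup>+x. ennreal (q * x powr (q-1) * h x powr q) * indicator {0<..<b} x \<partial>lborel)"
      by (rule weighted_powr_integral_ge[OF q])
    also have "\<dots> = (\<integral>\<^sup>+u. ennreal (q * (u-t) powr (q-1)) * enn_powr (g u) q * indicator {t<..<t+b} u \<partial>lborel)"
      using weighted_powr_integral_shift[OF q(1)] .
    also have "\<dots> \<le> ?R" by (intro nn_integral_mono mult_left_mono) (auto simp: indicator_def)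
    also have "\<dots> = enn_powr (enn_powr ?R (1/q)) q" using q by (simp add: enn_powr_powr)
    finally have "ennreal I \<le> enn_powr ?R (1/q)" using q by (simp add: enn_powr_le_iff)
    then show "(\<integral>\<^sup>+u. g u * indicator {t<..<t + real (Suc n)} u \<partial>lborel) \<le> enn_powr ?R (1/q)"
      using ennreal_I_eq_shift[OF b] by (simp add: b_def)
  qed
  then have "enn_powr ?H q \<le> enn_powr (enn_powr ?R (1/q)) q" using q by (intro enn_powr_mono) auto
  also have "\<dots> = ?R" using q by (simp add: enn_powr_powr)
  finally show ?thesis .
qed

end

section \<open>Hardy-type inequalities for a decreasing profile\<close>

text \<open>With \<open>a = 1/p\<close> and \<open>c = a - 1 = -1/p'\<close>, the \<open>q\<close>-th powers of the two Lorentz quasi-norms of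
  \<open>f\<close> are \<open>star_integral\<close> and \<open>sstar_integral\<close> for the profile \<open>g = f\<^sup>*\<close>.\<close>

locale decreasing_profile =
  fixes g :: "real \<Rightarrow> ennreal" and q a :: real
  assumes antimono: "antimono g" and q_pos: "0 < q" and a_gt_1: "1 < a"
begin

definition c where "c = a - 1"

lemma c_pos: "0 < c"
  using a_gt_1 by (simp add: c_def)

lemma measurable [measurable]: "g \<in> borel_measurable borel"
  by (rule antimono_borel_measurable[OF antimono])

definition tail where "tail t = (\<integral>\<^sup>+u. g u * indicator {t<..} u \<partial>lborel)"

lemma antimono_tail: "antimono tail"
  unfolding tail_def by (intro antimonoI nn_integral_mono mult_left_mono) (auto simp: indicator_def)

lemma tail_measurable [measurable]: "tail \<in> borel_measurable borel"
  by (rule antimono_borel_measurable[OF antimono_tail])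

definition star_integral where
  "star_integral = (\<integral>\<^sup>+u. enn_powr (g u) q * ennreal (u powr (q*a - 1)) * indicator {0<..} u \<partial>lborel)"

definition sstar_integral where
  "sstar_integral = (\<integral>\<^sup>+t. enn_powr (tail t) q * ennreal (t powr (q*c - 1)) * indicator {0<..} t \<partial>lborel)"

definition weighted_tail where
  "weighted_tail t = (\<integral>\<^sup>+u. enn_powr (g u) q * ennreal (u powr (a*(q-1))) * indicator {t<..} u \<partial>lborel)"

definition dual_weight where "dual_weight t = t powr (-c) / c"

definition Beta_tail where
  "Beta_tail t = (\<integral>\<^sup>+u. ennreal (q * (u-t) powr (q-1)) * enn_powr (g u) q * indicator {t<..} u \<partial>lborel)"

lemma dual_weight_pos: "0 < t \<Longrightarrow> 0 < dual_weight t"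
  using c_pos by (simp add: dual_weight_def)

lemma nn_integral_dual_weight:
  assumes "0 < t"
  shows "(\<integral>\<^sup>+u. ennreal (u powr (-a)) * indicator {t<..} u \<partial>lborel) = ennreal (dual_weight t)"
proof -
  have "-(t powr (-a+1))/(-a+1) = t powr (-(a-1)) / (a-1)" using a_gt_1 by (simp add: field_simps)
  then show ?thesis using nn_integral_powr_Ioi[of "-a" t] a_gt_1 assms unfolding dual_weight_def c_def by simp
qed

lemma weighted_tail_eq_tail: "q = 1 \<Longrightarrow> 0 < t \<Longrightarrow> weighted_tail t = tail t"
  unfolding weighted_tail_def tail_def by (intro nn_integral_cong) (auto simp: indicator_def)

text \<open>Hoelder's inequality with the weights \<open>u\<^sup>\<plusminus>\<^sup>a\<^sup>(\<^sup>q\<^sup>-\<^sup>1\<^sup>)\<^sup>/\<^sup>q\<close>.\<close>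

lemma tail_powr_le_Hoelder:
  assumes q: "1 \<le> q" and t: "0 < t"
  shows "enn_powr (tail t) q \<le> weighted_tail t * ennreal (dual_weight t powr (q-1))"
proof (cases "q = 1")
  case True
  then show ?thesis using weighted_tail_eq_tail t dual_weight_pos[OF t] by simp
next
  case False
  then have q: "1 < q" using q by simp
  define \<theta> where "\<theta> = 1/q"
  have \<theta>: "0 < \<theta>" "\<theta> < 1" using q by (auto simp: \<theta>_def)
  define X where "X u = enn_powr (g u) q * ennreal (u powr (a*(q-1))) * indicator {t<..} u" for u
  define Y where "Y u = ennreal (u powr (-a)) * indicator {t<..} u" for u
  have XY: "enn_powr (X u) \<theta> * enn_powr (Y u) (1-\<theta>) = g u * indicator {t<..} u" for u
  proof (cases "t < u")
    case True
    then have u: "0 < u" using t by simp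
    have "enn_powr (X u) \<theta> = g u * ennreal (u powr (a*(q-1)*\<theta>))"
      using True \<theta> q unfolding X_def by (simp add: enn_powr_mult enn_powr_powr \<theta>_def powr_powr)
    moreover have "enn_powr (Y u) (1-\<theta>) = ennreal (u powr (-a*(1-\<theta>)))"
      using True \<theta> unfolding Y_def by (simp add: powr_powr)
    moreover have "u powr (a*(q-1)*\<theta>) * u powr (-a*(1-\<theta>)) = 1"
    proof -
      have "a*(q-1)*\<theta> + (-a*(1-\<theta>)) = 0" using q by (simp add: \<theta>_def field_simps)
      then have "u powr (a*(q-1)*\<theta>) * u powr (-a*(1-\<theta>)) = u powr 0"
        by (metis powr_add)
      then show ?thesis using u by simp
    qed
    ultimately show ?thesis using True by (simp add: mult.assoc ennreal_mult[symmetric] del: ennreal_mult)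
  qed (use \<theta> in \<open>simp add: X_def Y_def\<close>)
  have "tail t = (\<integral>\<^sup>+u. enn_powr (X u) \<theta> * enn_powr (Y u) (1-\<theta>) \<partial>lborel)"
    unfolding tail_def XY ..
  also have "\<dots> \<le> enn_powr (\<integral>\<^sup>+u. X u \<partial>lborel) \<theta> * enn_powr (\<integral>\<^sup>+u. Y u \<partial>lborel) (1-\<theta>)"
    by (rule nn_integral_Hoelder[OF \<theta>]) (simp_all add: X_def Y_def)
  also have "(\<integral>\<^sup>+u. X u \<partial>lborel) = weighted_tail t" unfolding X_def weighted_tail_def ..
  also have "(\<integral>\<^sup>+u. Y u \<partial>lborel) = ennreal (dual_weight t)" unfolding Y_def using nn_integral_dual_weight[OF t] .
  finally have "enn_powr (tail t) q
      \<le> enn_powr (enn_powr (weighted_tail t) \<theta> * enn_powr (ennreal (dual_weight t)) (1-\<theta>)) q"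
    using q by (intro enn_powr_mono) auto
  also have "\<dots> = weighted_tail t * ennreal (dual_weight t powr (q-1))"
  proof -
    have e: "(q*q - q)/q = q - 1" using q by (simp add: field_simps)
    show ?thesis using \<theta> q dual_weight_pos[OF t]
      by (simp add: enn_powr_mult enn_powr_powr \<theta>_def powr_powr field_simps e)
  qed
  finally show ?thesis .
qed

lemma tail_powr_ge_Hoelder:
  assumes q: "q \<le> 1" and t: "0 < t"
  shows "weighted_tail t * ennreal (dual_weight t powr (q-1)) \<le> enn_powr (tail t) q"
proof (cases "q = 1")
  case True
  then show ?thesis using weighted_tail_eq_tail t dual_weight_pos[OF t] by simp
next
  case False
  then have q: "0 < q" "q < 1" using q q_pos by auto
  define X where "X u = g u * indicator {t<..} u" for u
  define Y where "Y u = ennreal (u powr (-a)) * indicator {t<..} u" for u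
  have XY: "enn_powr (X u) q * enn_powr (Y u) (1-q)
      = enn_powr (g u) q * ennreal (u powr (a*(q-1))) * indicator {t<..} u" for u
  proof (cases "t < u")
    case True
    have "-a*(1-q) = a*(q-1)" by (simp add: algebra_simps)
    then show ?thesis using True q unfolding X_def Y_def by (simp add: powr_powr)
  qed (use q in \<open>simp add: X_def Y_def\<close>)
  have "weighted_tail t = (\<integral>\<^sup>+u. enn_powr (X u) q * enn_powr (Y u) (1-q) \<partial>lborel)"
    unfolding weighted_tail_def XY ..
  also have "\<dots> \<le> enn_powr (\<integral>\<^sup>+u. X u \<partial>lborel) q * enn_powr (\<integral>\<^sup>+u. Y u \<partial>lborel) (1-q)"
    by (rule nn_integral_Hoelder[OF q]) (simp_all add: X_def Y_def)
  also have "(\<integral>\<^sup>+u. X u \<partial>lborel) = tail t" unfolding X_def tail_def ..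
  also have "(\<integral>\<^sup>+u. Y u \<partial>lborel) = ennreal (dual_weight t)" unfolding Y_def using nn_integral_dual_weight[OF t] .
  finally have "weighted_tail t * ennreal (dual_weight t powr (q-1))
      \<le> enn_powr (tail t) q * enn_powr (ennreal (dual_weight t)) (1-q) * ennreal (dual_weight t powr (q-1))"
    by (intro mult_right_mono) auto
  also have "\<dots> = enn_powr (tail t) q"
  proof -
    have "dual_weight t powr (1-q) * dual_weight t powr (q-1) = 1"
      using dual_weight_pos[OF t] by (simp add: powr_add[symmetric])
    then show ?thesis
      using dual_weight_pos[OF t] by (simp add: mult.assoc ennreal_mult[symmetric] del: ennreal_mult)
  qed
  finally show ?thesis .
qed

lemma dual_weight_powr_mult:
  assumes "0 < t"
  shows "dual_weight t powr (q-1) * t powr (q*c - 1) = c powr (1-q) * t powr (c-1)"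
proof -
  have "dual_weight t powr (q-1) = (t powr (-c)) powr (q-1) / c powr (q-1)"
    using assms c_pos unfolding dual_weight_def by (simp add: powr_divide less_imp_le)
  also have "(t powr (-c)) powr (q-1) = t powr (-c*(q-1))" by (simp add: powr_powr)
  also have "1 / c powr (q-1) = c powr (1-q)"
    using c_pos powr_minus_divide[of c "q-1"] by simp
  then have "t powr (-c*(q-1)) / c powr (q-1) = t powr (-c*(q-1)) * c powr (1-q)"
    by (metis divide_inverse inverse_eq_divide)
  finally have "dual_weight t powr (q-1) = t powr (-c*(q-1)) * c powr (1-q)" .
  moreover have "t powr (-c*(q-1)) * t powr (q*c - 1) = t powr (c-1)"
    using assms by (simp add: powr_add[symmetric] algebra_simps)
  ultimately show ?thesis by (metis mult.commute mult.left_commute)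
qed

lemma nn_integral_Hoelder_bound:
  "(\<integral>\<^sup>+t. weighted_tail t * ennreal (dual_weight t powr (q-1)) * ennreal (t powr (q*c - 1))
      * indicator {0<..} t \<partial>lborel) = ennreal (c powr (-q)) * star_integral"
proof -
  define K where "K t u = c powr (1-q) * t powr (c-1) * u powr (a*(q-1))" for t u
  have [measurable]: "case_prod K \<in> borel_measurable (lborel \<Otimes>\<^sub>M lborel)"
    unfolding K_def by measurable
  have lhs: "weighted_tail t * ennreal (dual_weight t powr (q-1)) * ennreal (t powr (q*c - 1)) * indicator {0<..} t
      = (\<integral>\<^sup>+u. ennreal (K t u) * enn_powr (g u) q * indicator {t<..} u \<partial>lborel) * indicator {0<..} t" for t
  proof (cases "0 < t")
    case True
    have "weighted_tail t * ennreal (dual_weight t powr (q-1)) * ennreal (t powr (q*c - 1))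
        = ennreal (c powr (1-q) * t powr (c-1)) * weighted_tail t"
      using dual_weight_powr_mult[OF True] by (simp add: ennreal_mult[symmetric] mult_ac del: ennreal_mult)
    also have "\<dots> = (\<integral>\<^sup>+u. ennreal (K t u) * enn_powr (g u) q * indicator {t<..} u \<partial>lborel)"
      unfolding weighted_tail_def K_def using c_pos
      by (subst nn_integral_cmult[symmetric]) (auto intro!: nn_integral_cong simp: ennreal_mult mult_ac)
    finally show ?thesis using True by simp
  qed simp
  have inner: "(\<integral>\<^sup>+t. ennreal (K t u) * indicator {0<..<u} t \<partial>lborel) = ennreal (c powr (-q) * u powr (q*a - 1))"
    if u: "0 < u" for u
  proof -
    have "(\<integral>\<^sup>+t. ennreal (K t u) * indicator {0<..<u} t \<partial>lborel)
        = ennreal (c powr (1-q) * u powr (a*(q-1))) * (\<integral>\<^sup>+t. ennreal (t powr (c-1)) * indicator {0<..<u} t \<partial>lborel)"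
      unfolding K_def by (subst nn_integral_cmult[symmetric]) (auto intro!: nn_integral_cong simp: ennreal_mult mult_ac)
    also have "(\<integral>\<^sup>+t. ennreal (t powr (c-1)) * indicator {0<..<u} t \<partial>lborel) = ennreal (u powr c / c)"
      using nn_integral_powr_Ioo_0[of "c-1" u] u c_pos by simp
    also have "ennreal (c powr (1-q) * u powr (a*(q-1))) * ennreal (u powr c / c)
        = ennreal (c powr (1-q) * u powr (a*(q-1)) * (u powr c / c))"
      by (subst ennreal_mult) (use u c_pos in \<open>auto simp: ennreal_mult\<close>)
    also have "c powr (1-q) * u powr (a*(q-1)) * (u powr c / c) = c powr (-q) * u powr (q*a - 1)"
    proof -
      have "c powr (1-q) / c = c powr (-q)" using c_pos by (simp add: powr_diff powr_minus_divide)
      moreover have "u powr (a*(q-1)) * u powr c = u powr (q*a - 1)"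
        using u by (simp add: powr_add[symmetric] c_def algebra_simps)
      ultimately show ?thesis by (metis (no_types, lifting) mult.commute times_divide_eq_left mult.left_commute)
    qed
    finally show ?thesis .
  qed
  have "(\<integral>\<^sup>+t. weighted_tail t * ennreal (dual_weight t powr (q-1)) * ennreal (t powr (q*c - 1))
      * indicator {0<..} t \<partial>lborel)
      = (\<integral>\<^sup>+u. ennreal (c powr (-q) * u powr (q*a - 1)) * enn_powr (g u) q * indicator {0<..} u \<partial>lborel)"
    unfolding lhs by (rule nn_integral_Ioi_kernel[OF _ _ inner]) simp_all
  also have "\<dots> = ennreal (c powr (-q)) * star_integral"
    unfolding star_integral_def
    by (subst nn_integral_cmult[symmetric]) (auto intro!: nn_integral_cong simp: ennreal_mult mult_ac)
  finally show ?thesis .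
qed

lemma nn_integral_Beta_tail:
  "(\<integral>\<^sup>+t. Beta_tail t * ennreal (t powr (q*c - 1)) * indicator {0<..} t \<partial>lborel)
     = ennreal (q * Beta q (q*c)) * star_integral"
proof -
  have qc: "0 < q*c" using q_pos c_pos by simp
  define K where "K t u = t powr (q*c - 1) * (q * (u-t) powr (q-1))" for t u
  have [measurable]: "case_prod K \<in> borel_measurable (lborel \<Otimes>\<^sub>M lborel)"
    unfolding K_def by measurable
  have lhs: "Beta_tail t * ennreal (t powr (q*c - 1)) * indicator {0<..} t
      = (\<integral>\<^sup>+u. ennreal (K t u) * enn_powr (g u) q * indicator {t<..} u \<partial>lborel) * indicator {0<..} t" for t
    unfolding Beta_tail_def K_def using q_pos
    by (subst mult.commute, subst nn_integral_cmult[symmetric])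
      (auto intro!: nn_integral_cong simp: ennreal_mult mult_ac)
  have inner: "(\<integral>\<^sup>+t. ennreal (K t u) * indicator {0<..<u} t \<partial>lborel) = ennreal (q * Beta q (q*c) * u powr (q*a - 1))"
    if u: "0 < u" for u
  proof -
    have "(\<integral>\<^sup>+t. ennreal (K t u) * indicator {0<..<u} t \<partial>lborel)
        = ennreal q * (\<integral>\<^sup>+t. ennreal (t powr (q*c - 1) * (u-t) powr (q-1)) * indicator {0<..<u} t \<partial>lborel)"
      unfolding K_def using q_pos
      by (subst nn_integral_cmult[symmetric]) (auto intro!: nn_integral_cong simp: ennreal_mult mult_ac)
    also have "\<dots> = ennreal q * ennreal (u powr (q*c + q - 1) * Beta (q*c) q)"
      using nn_integral_Beta[OF qc q_pos u] by simp
    also have "u powr (q*c + q - 1) = u powr (q*a - 1)" by (simp add: c_def algebra_simps)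
    finally show ?thesis using q_pos Beta_real_pos[OF q_pos qc]
      by (simp add: Beta_commute ennreal_mult[symmetric] mult_ac del: ennreal_mult)
  qed
  have "(\<integral>\<^sup>+t. Beta_tail t * ennreal (t powr (q*c - 1)) * indicator {0<..} t \<partial>lborel)
      = (\<integral>\<^sup>+u. ennreal (q * Beta q (q*c) * u powr (q*a - 1)) * enn_powr (g u) q * indicator {0<..} u \<partial>lborel)"
    unfolding lhs by (rule nn_integral_Ioi_kernel[OF _ _ inner]) simp_all
  also have "\<dots> = ennreal (q * Beta q (q*c)) * star_integral"
    unfolding star_integral_def using q_pos Beta_real_pos[OF q_pos qc]
    by (subst nn_integral_cmult[symmetric]) (auto intro!: nn_integral_cong simp: ennreal_mult mult_ac)
  finally show ?thesis .
qed

end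

lemma nn_integral_top_Ioo:
  fixes s t :: real
  shows "s < t \<Longrightarrow> (\<integral>\<^sup>+u. \<infinity> * indicator {s<..<t} u \<partial>lborel) = \<infinity>"
  by (subst nn_integral_cmult_indicator) (auto simp: ennreal_top_mult)

context decreasing_profile
begin

lemma sstar_integral_le_Hardy:
  assumes "1 \<le> q"
  shows "sstar_integral \<le> ennreal (c powr (-q)) * star_integral"
proof -
  have "sstar_integral \<le> (\<integral>\<^sup>+t. weighted_tail t * ennreal (dual_weight t powr (q-1))
      * ennreal (t powr (q*c - 1)) * indicator {0<..} t \<partial>lborel)"
    unfolding sstar_integral_def
    using tail_powr_le_Hoelder[OF assms]
    by (intro nn_integral_mono) (auto simp: indicator_def intro: mult_right_mono)
  then show ?thesis using nn_integral_Hoelder_bound by simp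
qed

lemma Hardy_le_sstar_integral:
  assumes "q \<le> 1"
  shows "ennreal (c powr (-q)) * star_integral \<le> sstar_integral"
proof -
  have "(\<integral>\<^sup>+t. weighted_tail t * ennreal (dual_weight t powr (q-1))
      * ennreal (t powr (q*c - 1)) * indicator {0<..} t \<partial>lborel) \<le> sstar_integral"
    unfolding sstar_integral_def
    using tail_powr_ge_Hoelder[OF assms]
    by (intro nn_integral_mono) (auto simp: indicator_def intro: mult_right_mono)
  then show ?thesis using nn_integral_Hoelder_bound by simp
qed

lemma integrals_eq_top:
  assumes "0 < t\<^sub>0" "g t\<^sub>0 = \<infinity>"
  shows "star_integral = \<infinity>" "sstar_integral = \<infinity>"
proof -
  have g_top: "g t = \<infinity>" if "t \<le> t\<^sub>0" for t
  proof -
    have "g t\<^sub>0 \<le> g t" using antimono that unfolding antimono_def by blast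
    then show ?thesis using assms by (simp add: top_unique)
  qed
  have tail_top: "tail t = \<infinity>" if "t < t\<^sub>0" for t
  proof -
    have "(\<integral>\<^sup>+u. \<infinity> * indicator {t<..<t\<^sub>0} u \<partial>lborel) \<le> tail t"
      unfolding tail_def by (intro nn_integral_mono) (auto simp: indicator_def g_top)
    then show ?thesis using that nn_integral_top_Ioo by (simp add: top_unique)
  qed
  have "(\<integral>\<^sup>+u. \<infinity> * indicator {0<..<t\<^sub>0} u \<partial>lborel) \<le> star_integral"
    unfolding star_integral_def
    by (intro nn_integral_mono) (auto simp: indicator_def g_top ennreal_top_mult)
  then show "star_integral = \<infinity>" using assms nn_integral_top_Ioo by (simp add: top_unique)
  have "(\<integral>\<^sup>+u. \<infinity> * indicator {0<..<t\<^sub>0} u \<partial>lborel) \<le> sstar_integral"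
    unfolding sstar_integral_def
    by (intro nn_integral_mono) (auto simp: indicator_def tail_top ennreal_top_mult)
  then show "sstar_integral = \<infinity>" using assms nn_integral_top_Ioo by (simp add: top_unique)
qed

lemma decreasing_tail: "(\<And>u. 0 < u \<Longrightarrow> g u \<noteq> \<infinity>) \<Longrightarrow> 0 < t \<Longrightarrow> decreasing_tail g t"
  by unfold_locales (use antimono in auto)

lemma Beta_le_sstar_integral:
  assumes "1 \<le> q"
  shows "ennreal (q * Beta q (q*c)) * star_integral \<le> sstar_integral"
proof (cases "\<exists>t\<^sub>0>0. g t\<^sub>0 = \<infinity>")
  case True
  then show ?thesis using integrals_eq_top by auto
next
  case False
  then have "Beta_tail t \<le> enn_powr (tail t) q" if "0 < t" for t
    using decreasing_tail.tail_weighted_powr_le[OF decreasing_tail[OF _ that] assms]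
    unfolding Beta_tail_def tail_def by auto
  then have "(\<integral>\<^sup>+t. Beta_tail t * ennreal (t powr (q*c - 1)) * indicator {0<..} t \<partial>lborel) \<le> sstar_integral"
    unfolding sstar_integral_def by (intro nn_integral_mono) (auto simp: indicator_def intro: mult_right_mono)
  then show ?thesis using nn_integral_Beta_tail by simp
qed

lemma sstar_integral_le_Beta:
  assumes "q \<le> 1"
  shows "sstar_integral \<le> ennreal (q * Beta q (q*c)) * star_integral"
proof (cases "\<exists>t\<^sub>0>0. g t\<^sub>0 = \<infinity>")
  case True
  have "0 < Beta q (q*c)" using q_pos c_pos by (simp add: Beta_real_pos)
  then show ?thesis using True integrals_eq_top q_pos by (auto simp: ennreal_mult_top)
next
  case False
  then have "enn_powr (tail t) q \<le> Beta_tail t" if "0 < t" for t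
    using decreasing_tail.tail_weighted_powr_ge[OF decreasing_tail[OF _ that] q_pos assms]
    unfolding Beta_tail_def tail_def by auto
  then have "sstar_integral \<le> (\<integral>\<^sup>+t. Beta_tail t * ennreal (t powr (q*c - 1)) * indicator {0<..} t \<partial>lborel)"
    unfolding sstar_integral_def by (intro nn_integral_mono) (auto simp: indicator_def intro: mult_right_mono)
  then show ?thesis using nn_integral_Beta_tail by simp
qed

end

section \<open>The two Lorentz quasi-norms\<close>

lemma antimono_rearr: "antimono (rearr M f)"
proof (rule antimonoI)
  fix x y :: real assume "x \<le> y"
  then have "{s. emeasure M {x \<in> space M. s < ennreal \<bar>f x\<bar>} \<le> ennreal x}
      \<subseteq> {s. emeasure M {x \<in> space M. s < ennreal \<bar>f x\<bar>} \<le> ennreal y}"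
    by (auto intro: order.trans ennreal_leI)
  then show "rearr M f y \<le> rearr M f x" unfolding rearr_def by (rule Inf_superset_mono)
qed

lemma decreasing_profile_rearr: "0 < p \<Longrightarrow> p < 1 \<Longrightarrow> 0 < q \<Longrightarrow> decreasing_profile (rearr M f) q (1/p)"
  by unfold_locales (use antimono_rearr in auto)

lemma pconj_eq:
  assumes "0 < p" "p < 1"
  shows "- q / pconj p = q * (1/p - 1)" "- pconj p = 1 / (1/p - 1)"
  using assms by (auto simp: pconj_def field_simps)

lemma lorentz_star_eq:
  assumes "0 < p" "p < 1" "0 < q"
  shows "lorentz_star M f p q = enn_powr (decreasing_profile.star_integral (rearr M f) q (1/p)) (1/q)"
proof -
  interpret decreasing_profile "rearr M f" q "1/p"
    by (rule decreasing_profile_rearr[OF assms])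
  have "enn_powr (rearr M f t * ennreal (t powr (1/p))) q * ennreal (1/t) * indicator {0<..} t
      = enn_powr (rearr M f t) q * ennreal (t powr (q * (1/p) - 1)) * indicator {0<..} t" for t
  proof (cases "0 < t")
    case True
    have "(t powr (1/p)) powr q * (1/t) = t powr (q * (1/p) - 1)"
      using True by (simp add: powr_powr powr_diff mult.commute)
    then show ?thesis using True assms
      by (simp add: enn_powr_mult mult.assoc ennreal_mult[symmetric] del: ennreal_mult)
  qed simp
  then show ?thesis unfolding lorentz_star_def star_integral_def by simp
qed

lemma lorentz_sstar_eq:
  assumes "0 < p" "p < 1" "0 < q"
  shows "lorentz_sstar M f p q = enn_powr (decreasing_profile.sstar_integral (rearr M f) q (1/p)) (1/q)"
proof -
  interpret decreasing_profile "rearr M f" q "1/p"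
    by (rule decreasing_profile_rearr[OF assms])
  have "t powr (- q / pconj p) * (1/t) = t powr (q * c - 1)" if "0 < t" for t
    using that pconj_eq[OF assms(1,2)] by (simp add: powr_diff c_def)
  then have "enn_powr (\<integral>\<^sup>+ u \<in> {t<..}. rearr M f u \<partial>lborel) q * ennreal (t powr (- q / pconj p))
      * ennreal (1/t) * indicator {0<..} t
      = enn_powr (tail t) q * ennreal (t powr (q * c - 1)) * indicator {0<..} t" for t
    unfolding tail_def by (cases "0 < t") (simp_all add: mult.assoc ennreal_mult[symmetric] del: ennreal_mult)
  then show ?thesis unfolding lorentz_sstar_def sstar_integral_def by simp
qed

theorem lorentz_norm_inequalities:
  fixes p q :: real
  assumes p: "0 < p" "p < 1" and q: "0 < q"
  defines "K \<equiv> (q * Beta q (- q / pconj p)) powr (1/q)"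
  shows "1 \<le> q \<Longrightarrow> ennreal K * lorentz_star M f p q \<le> lorentz_sstar M f p q"
    and "1 \<le> q \<Longrightarrow> lorentz_sstar M f p q \<le> ennreal (- pconj p) * lorentz_star M f p q"
    and "q \<le> 1 \<Longrightarrow> lorentz_sstar M f p q \<le> ennreal K * lorentz_star M f p q"
    and "q \<le> 1 \<Longrightarrow> ennreal (- pconj p) * lorentz_star M f p q \<le> lorentz_sstar M f p q"
proof -
  interpret decreasing_profile "rearr M f" q "1/p"
    by (rule decreasing_profile_rearr[OF p q])
  have Beta: "- q / pconj p = q * c" using pconj_eq[OF p] by (simp add: c_def)
  have Hardy: "- pconj p = (c powr (-q)) powr (1/q)"
  proof -
    have "(c powr (-q)) powr (1/q) = c powr (-1)" using q by (simp add: powr_powr)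
    then show ?thesis using pconj_eq(2)[OF p] c_pos by (simp add: c_def powr_minus_divide)
  qed
  have K: "ennreal K * lorentz_star M f p q = enn_powr (ennreal (q * Beta q (q*c)) * star_integral) (1/q)"
    unfolding K_def Beta lorentz_star_eq[OF p q]
    using q c_pos Beta_real_pos[of q "q*c"] by (simp add: enn_powr_ennreal_mult)
  have H: "ennreal (- pconj p) * lorentz_star M f p q = enn_powr (ennreal (c powr (-q)) * star_integral) (1/q)"
    unfolding Hardy lorentz_star_eq[OF p q] using q by (simp add: enn_powr_ennreal_mult)
  have mono: "x \<le> y \<Longrightarrow> enn_powr x (1/q) \<le> enn_powr y (1/q)" for x y
    using q by (simp add: enn_powr_mono)
  show "1 \<le> q \<Longrightarrow> ennreal K * lorentz_star M f p q \<le> lorentz_sstar M f p q"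
    unfolding K lorentz_sstar_eq[OF p q] by (intro mono Beta_le_sstar_integral)
  show "1 \<le> q \<Longrightarrow> lorentz_sstar M f p q \<le> ennreal (- pconj p) * lorentz_star M f p q"
    unfolding H lorentz_sstar_eq[OF p q] by (intro mono sstar_integral_le_Hardy)
  show "q \<le> 1 \<Longrightarrow> lorentz_sstar M f p q \<le> ennreal K * lorentz_star M f p q"
    unfolding K lorentz_sstar_eq[OF p q] by (intro mono sstar_integral_le_Beta)
  show "q \<le> 1 \<Longrightarrow> ennreal (- pconj p) * lorentz_star M f p q \<le> lorentz_sstar M f p q"
    unfolding H lorentz_sstar_eq[OF p q] by (intro mono Hardy_le_sstar_integral)
qed

section \<open>Sharpness of the constants\<close>

lemma enn_powr_less_of_coefficient:
  assumes "0 < q" "0 < S" "S < \<infinity>" "T \<le> ennreal k * S" "0 \<le> k" "0 \<le> C" "k < C powr q"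
  shows "enn_powr T (1/q) < ennreal C * enn_powr S (1/q)"
proof (rule enn_powr_less_ennreal_mult)
  have "ennreal k * S < ennreal (C powr q) * S"
    using assms by (intro ennreal_mult_strict_right_mono) (auto simp: ennreal_less_iff)
  then show "T < ennreal (C powr q) * S" by (rule le_less_trans[OF assms(4)])
qed (use assms in auto)

lemma coefficient_less_enn_powr:
  assumes q: "0 < q" and S: "0 < S" "S < \<infinity>" and T: "ennreal k * S \<le> T" and "0 < k" "C < k powr (1/q)"
  shows "ennreal C * enn_powr S (1/q) < enn_powr T (1/q)"
proof -
  define C' where "C' = max C (k powr (1/q) / 2)"
  have "0 < k powr (1/q)" using \<open>0 < k\<close> by simp
  then have C': "0 < C'" "C' < k powr (1/q)" using assms by (auto simp: C'_def less_max_iff_disj)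
  then have "C' powr q < (k powr (1/q)) powr q" using q by (intro powr_less_mono2) auto
  also have "\<dots> = k" using q \<open>0 < k\<close> by (simp add: powr_powr)
  finally have "ennreal (C' powr q) * S < ennreal k * S"
    using S C' by (intro ennreal_mult_strict_right_mono) (auto simp: ennreal_less_iff)
  then have "ennreal C' * enn_powr S (1/q) < enn_powr T (1/q)"
    using q C' T by (intro ennreal_mult_enn_powr_less) auto
  moreover have "ennreal C * enn_powr S (1/q) \<le> ennreal C' * enn_powr S (1/q)"
    by (intro mult_right_mono ennreal_leI) (auto simp: C'_def)
  ultimately show ?thesis by (rule le_less_trans[rotated])
qed

lemma rearr_lborel_eq:
  fixes f :: "real \<Rightarrow> real"
  assumes meas[measurable]: "f \<in> borel_measurable borel"
    and zero: "\<And>x. x \<le> 0 \<Longrightarrow> f x = 0"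
    and nonneg: "\<And>x. 0 \<le> f x"
    and decreasing: "\<And>x y. 0 < x \<Longrightarrow> x \<le> y \<Longrightarrow> f y \<le> f x"
    and right_usc: "\<And>t s. 0 < t \<Longrightarrow> s < f t \<Longrightarrow> \<exists>t'>t. s < f t'"
    and t: "0 < t"
  shows "rearr lborel f t = ennreal (f t)"
proof -
  define admissible where "admissible s = (emeasure lborel {x \<in> space lborel. s < ennreal \<bar>f x\<bar>} \<le> ennreal t)" for s
  have admissible_f: "admissible (ennreal (f t))"
  proof -
    have "{x \<in> space lborel. ennreal (f t) < ennreal \<bar>f x\<bar>} \<subseteq> {0<..<t}"
    proof
      fix x assume "x \<in> {x \<in> space lborel. ennreal (f t) < ennreal \<bar>f x\<bar>}"
      then have lt: "f t < f x" using nonneg[of x] nonneg[of t] by (simp add: ennreal_less_iff)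
      have "0 < x" using lt zero[of x] nonneg[of t] by (cases "x \<le> 0") auto
      moreover have "x < t" using lt decreasing[of t x] t by (cases "t \<le> x") auto
      ultimately show "x \<in> {0<..<t}" by simp
    qed
    then have "emeasure lborel {x \<in> space lborel. ennreal (f t) < ennreal \<bar>f x\<bar>} \<le> emeasure lborel {0<..<t}"
      by (intro emeasure_mono) auto
    then show ?thesis using t by (simp add: admissible_def)
  qed
  have admissible_ge: "ennreal (f t) \<le> s" if "admissible s" for s
  proof (rule ccontr)
    assume "\<not> ennreal (f t) \<le> s"
    then have "s < ennreal (f t)" by simp
    then obtain s' where s': "s = ennreal s'" "0 \<le> s'" "s' < f t"
      by (cases s rule: ennreal_cases) (auto simp: ennreal_less_iff)
    obtain t' where t': "t < t'" "s' < f t'" using right_usc[OF t s'(3)] by auto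
    have "{0<..t'} \<subseteq> {x \<in> space lborel. s < ennreal \<bar>f x\<bar>}"
    proof
      fix x assume x: "x \<in> {0<..t'}"
      then have "f t' \<le> f x" using decreasing by auto
      then have "s' < \<bar>f x\<bar>" using t' nonneg[of x] by simp
      then show "x \<in> {x \<in> space lborel. s < ennreal \<bar>f x\<bar>}" using s' by (simp add: ennreal_less_iff)
    qed
    then have "emeasure lborel {0<..t'} \<le> emeasure lborel {x \<in> space lborel. s < ennreal \<bar>f x\<bar>}"
      by (intro emeasure_mono) auto
    moreover have "emeasure lborel {0<..t'} = ennreal t'" using t t' by simp
    ultimately have "ennreal t' \<le> ennreal t" using that unfolding admissible_def by (metis order.trans)
    then show False using t t' by (simp add: ennreal_le_iff)
  qed
  have "rearr lborel f t = Inf {s. admissible s}" unfolding rearr_def admissible_def by simp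
  also have "\<dots> = ennreal (f t)"
    by (rule antisym) (auto intro: Inf_lower Inf_greatest admissible_f admissible_ge)
  finally show ?thesis .
qed

lemma rearr_indicator_unit:
  assumes "0 < t"
  shows "rearr lborel (indicator {0<..<1::real}) t = ennreal (indicator {0<..<1} t)"
proof (rule rearr_lborel_eq[OF _ _ _ _ _ assms])
  fix t s :: real assume t: "0 < t" and s: "s < indicator {0<..<1} t"
  show "\<exists>t'>t. s < indicator {0<..<1} t'"
  proof (cases "t < 1")
    case True
    then show ?thesis using s t by (intro exI[of _ "(t+1)/2"]) (auto simp: indicator_def)
  next
    case False
    then show ?thesis using s t by (intro exI[of _ "t+1"]) (auto simp: indicator_def)
  qed
qed (auto simp: indicator_def)

locale unit_step_profile =
  fixes q a :: real
  assumes q_pos: "0 < q" and a_gt_1: "1 < a"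
begin

sublocale decreasing_profile "rearr lborel (indicator {0<..<1} :: real \<Rightarrow> real)" q a
  by unfold_locales (use antimono_rearr q_pos a_gt_1 in auto)

lemma star_integral_eq: "star_integral = ennreal (1 / (q * a))"
proof -
  have "star_integral = (\<integral>\<^sup>+t. ennreal (t powr (q * a - 1)) * indicator {0<..<1} t \<partial>lborel)"
    unfolding star_integral_def
    by (intro nn_integral_cong) (auto simp: rearr_indicator_unit indicator_def q_pos)
  also have "\<dots> = ennreal (1 powr (q * a - 1 + 1) / (q * a - 1 + 1))"
    by (rule nn_integral_powr_Ioo_0) (use q_pos a_gt_1 in auto)
  finally show ?thesis by simp
qed

lemma tail_eq:
  assumes "0 < t"
  shows "tail t = ennreal (1 - t) * indicator {0<..<1} t"
proof (cases "t < 1")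
  case True
  have "tail t = (\<integral>\<^sup>+u. 1 * indicator {t<..<1} u \<partial>lborel)"
    unfolding tail_def using assms
    by (intro nn_integral_cong) (auto simp: rearr_indicator_unit indicator_def)
  also have "\<dots> = ennreal (1 - t)" using True by (subst nn_integral_cmult_indicator) auto
  finally show ?thesis using True assms by simp
next
  case False
  have "rearr lborel (indicator {0<..<1::real}) u * indicator {t<..} u = 0" for u
    using assms False by (cases "t < u") (auto simp: rearr_indicator_unit indicator_def)
  then have "(\<lambda>u. rearr lborel (indicator {0<..<1::real}) u * indicator {t<..} u) = (\<lambda>u. 0)"
    by auto
  then have "tail t = 0" unfolding tail_def by (simp only:) simp
  then show ?thesis using False by simp
qed

lemma sstar_integral_eq: "sstar_integral = ennreal (q * Beta q (q*c)) * star_integral"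
proof -
  have qc: "0 < q * c" using q_pos c_pos by simp
  have "sstar_integral = (\<integral>\<^sup>+t. ennreal (t powr (q*c - 1) * (1 - t) powr ((q + 1) - 1)) * indicator {0<..<1} t \<partial>lborel)"
    unfolding sstar_integral_def
  proof (intro nn_integral_cong)
    fix t
    show "enn_powr (tail t) q * ennreal (t powr (q * c - 1)) * indicator {0<..} t =
         ennreal (t powr (q * c - 1) * (1 - t) powr (q + 1 - 1)) * indicator {0<..<1} t"
      using tail_eq[of t] q_pos by (cases "0 < t \<and> t < 1") (auto simp: ennreal_mult mult.commute indicator_def)
  qed
  also have "\<dots> = ennreal (Beta (q*c) (q+1))"
    using nn_integral_Beta[of "q*c" "q+1" 1] qc q_pos by simp
  also have "Beta (q*c) (q+1) = q * Beta q (q*c) * (1 / (q * a))"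
  proof -
    have "(q + q*c) * Beta (q + 1) (q*c) = q * Beta q (q*c)"
      by (rule Beta_plus1_left) (use q_pos in \<open>auto elim!: nonpos_Ints_cases\<close>)
    moreover have "q + q*c = q * a" by (simp add: c_def algebra_simps)
    ultimately show ?thesis using q_pos a_gt_1 by (simp add: Beta_commute field_simps)
  qed
  finally show ?thesis
    using q_pos a_gt_1 Beta_real_pos[OF q_pos qc] by (simp add: star_integral_eq ennreal_mult[symmetric])
qed

end

lemma lorentz_norms_unit_step:
  assumes p: "0 < p" "p < 1" and q: "0 < q"
  defines "S \<equiv> ennreal (p / q)"
  shows "lorentz_star lborel (indicator {0<..<1::real}) p q = enn_powr S (1/q)"
    and "lorentz_sstar lborel (indicator {0<..<1::real}) p q
      = enn_powr (ennreal (q * Beta q (- q / pconj p)) * S) (1/q)"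
proof -
  interpret unit_step_profile q "1/p" by unfold_locales (use p q in auto)
  have S: "star_integral = S" using star_integral_eq unfolding S_def by simp
  show "lorentz_star lborel (indicator {0<..<1::real}) p q = enn_powr S (1/q)"
    unfolding lorentz_star_eq[OF p q] S ..
  show "lorentz_sstar lborel (indicator {0<..<1::real}) p q
      = enn_powr (ennreal (q * Beta q (- q / pconj p)) * S) (1/q)"
    unfolding lorentz_sstar_eq[OF p q] sstar_integral_eq S pconj_eq[OF p] c_def by simp
qed

lemma Beta_constant_sharp:
  fixes p q :: real
  assumes p: "0 < p" "p < 1" and q: "0 < q"
  defines "K \<equiv> q * Beta q (- q / pconj p)"
  shows "K powr (1/q) < C \<Longrightarrow> \<exists>f::real \<Rightarrow> real. f \<in> borel_measurable lborel \<and>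
           lorentz_sstar lborel f p q < ennreal C * lorentz_star lborel f p q"
    and "C < K powr (1/q) \<Longrightarrow> \<exists>f::real \<Rightarrow> real. f \<in> borel_measurable lborel \<and>
           ennreal C * lorentz_star lborel f p q < lorentz_sstar lborel f p q"
proof -
  have "0 < - q / pconj p" using pconj_eq(1)[OF p] p q by simp
  then have K: "0 < K" using q Beta_real_pos[of q "- q / pconj p"] by (simp add: K_def)
  note norms = lorentz_norms_unit_step[OF p q, folded K_def]
  have S: "0 < ennreal (p/q)" "ennreal (p/q) < \<infinity>" using p q by auto
  show "\<exists>f::real \<Rightarrow> real. f \<in> borel_measurable lborel \<and>
      lorentz_sstar lborel f p q < ennreal C * lorentz_star lborel f p q" if C: "K powr (1/q) < C"
  proof (intro exI conjI)
    have "(K powr (1/q)) powr q < C powr q" using powr_less_mono2[OF q powr_ge_zero C] .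
    then have "K < C powr q" using q K by (simp add: powr_powr)
    moreover have "0 \<le> C" using C by (metis powr_ge_zero order.trans less_imp_le)
    ultimately show "lorentz_sstar lborel (indicator {0<..<1::real}) p q
        < ennreal C * lorentz_star lborel (indicator {0<..<1::real}) p q"
      unfolding norms using q S K by (intro enn_powr_less_of_coefficient[of q _ _ K]) auto
  qed simp
  show "\<exists>f::real \<Rightarrow> real. f \<in> borel_measurable lborel \<and>
      ennreal C * lorentz_star lborel f p q < lorentz_sstar lborel f p q" if "C < K powr (1/q)"
  proof (intro exI conjI)
    show "ennreal C * lorentz_star lborel (indicator {0<..<1::real}) p q
        < lorentz_sstar lborel (indicator {0<..<1::real}) p q"
      unfolding norms using that q S K by (intro coefficient_less_enn_powr[of q _ K]) auto
  qed simp
qed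

definition power_tail :: "real \<Rightarrow> real \<Rightarrow> real" where
  "power_tail b x = (if x \<le> 0 then 0 else min 1 (x powr (-b)))"

lemma power_tail_measurable[measurable]: "power_tail b \<in> borel_measurable borel"
  unfolding power_tail_def by measurable

lemma power_tail_lt_1: "0 < b \<Longrightarrow> 0 < x \<Longrightarrow> x < 1 \<Longrightarrow> power_tail b x = 1"
proof -
  assume "0 < b" "0 < x" "x < 1"
  have "x powr b < 1 powr b" using \<open>0 < b\<close> \<open>0 < x\<close> \<open>x < 1\<close> by (intro powr_less_mono2) auto
  then have xb: "x powr b < 1" by simp
  have "x powr (-b) = 1 / x powr b" by (simp add: powr_minus_divide)
  moreover have "0 < x powr b" using \<open>0 < x\<close> by simp
  ultimately have "1 < x powr (-b)" using xb by simp
  then show ?thesis using \<open>0 < x\<close> by (simp add: power_tail_def)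
qed

lemma power_tail_ge_1: "0 < b \<Longrightarrow> 1 \<le> x \<Longrightarrow> power_tail b x = x powr (-b)"
proof -
  assume "0 < b" "1 \<le> x"
  then have "x powr (-b) \<le> 1" by (simp add: powr_le_one_le ge_one_powr_ge_zero powr_minus_divide)
  then show ?thesis using \<open>1 \<le> x\<close> by (simp add: power_tail_def)
qed

lemma eventually_at_right_witness:
  fixes a :: real
  assumes "eventually P (at_right a)"
  obtains b where "a < b" "P b"
  using eventually_happens'[OF trivial_limit_at_right_real eventually_conj[OF eventually_at_right_less assms]]
  by blast

lemma rearr_power_tail:
  assumes b: "0 < b" and t: "0 < t"
  shows "rearr lborel (power_tail b) t = ennreal (power_tail b t)"
proof (rule rearr_lborel_eq[OF power_tail_measurable _ _ _ _ t])
  fix x :: real assume "x \<le> 0" then show "power_tail b x = 0" by (simp add: power_tail_def)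
next
  fix x show "0 \<le> power_tail b x" by (simp add: power_tail_def)
next
  fix x y :: real assume "0 < x" "x \<le> y"
  then have "y powr (-b) \<le> x powr (-b)" using b by (intro powr_mono2') auto
  then show "power_tail b y \<le> power_tail b x" using \<open>0 < x\<close> \<open>x \<le> y\<close> by (auto simp: power_tail_def)
next
  fix t s :: real assume t: "0 < t" and s: "s < power_tail b t"
  have "((\<lambda>x. min 1 (x powr (-b))) \<longlongrightarrow> min 1 (t powr (-b))) (at_right t)"
    using t by (intro tendsto_intros) auto
  then have "eventually (\<lambda>x. s < min 1 (x powr (-b))) (at_right t)"
    using s t by (intro order_tendstoD(1)) (auto simp: power_tail_def)
  then obtain t' where "t < t'" "s < min 1 (t' powr (-b))" by (rule eventually_at_right_witness)
  then show "\<exists>t'>t. s < power_tail b t'" using t by (intro exI[of _ t']) (auto simp: power_tail_def)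
qed

locale power_tail_profile =
  fixes b q a :: real
  assumes q_pos: "0 < q" and a_gt_1: "1 < a" and a_less_b: "a < b"
begin

sublocale decreasing_profile "rearr lborel (power_tail b)" q a
  by unfold_locales (use antimono_rearr q_pos a_gt_1 in auto)

lemma b_pos: "0 < b" using a_gt_1 a_less_b by simp
lemma b_gt_1: "1 < b" using a_gt_1 a_less_b by simp

lemma rearr_eq: "0 < t \<Longrightarrow> rearr lborel (power_tail b) t = ennreal (power_tail b t)"
  by (rule rearr_power_tail[OF b_pos])

lemma star_integral_eq: "star_integral = ennreal (b / (q*a*(b-a)))"
proof -
  have "star_integral = (\<integral>\<^sup>+t. enn_powr (rearr lborel (power_tail b) t) q * ennreal (t powr (q*a - 1)) * indicator {0<..<1} t \<partial>lborel)
    + (\<integral>\<^sup>+t. enn_powr (rearr lborel (power_tail b) t) q * ennreal (t powr (q*a - 1)) * indicator {1<..} t \<partial>lborel)"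
    unfolding star_integral_def by (rule nn_integral_Ioi_split) simp
  also have "(\<integral>\<^sup>+t. enn_powr (rearr lborel (power_tail b) t) q * ennreal (t powr (q*a - 1)) * indicator {0<..<1} t \<partial>lborel)
      = (\<integral>\<^sup>+t. ennreal (t powr (q*a - 1)) * indicator {0<..<1} t \<partial>lborel)"
    by (intro nn_integral_cong) (auto simp: indicator_def rearr_eq power_tail_lt_1 b_pos)
  also have "\<dots> = ennreal (1 powr (q*a - 1 + 1) / (q*a - 1 + 1))"
    by (rule nn_integral_powr_Ioo_0) (use q_pos a_gt_1 in auto)
  also have "(\<integral>\<^sup>+t. enn_powr (rearr lborel (power_tail b) t) q * ennreal (t powr (q*a - 1)) * indicator {1<..} t \<partial>lborel)
      = (\<integral>\<^sup>+t. ennreal (t powr (q*(a-b) - 1)) * indicator {1<..} t \<partial>lborel)"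
  proof (intro nn_integral_cong)
    fix t show "enn_powr (rearr lborel (power_tail b) t) q * ennreal (t powr (q*a - 1)) * indicator {1<..} t
        = ennreal (t powr (q*(a-b) - 1)) * indicator {1<..} t"
    proof (cases "1 < t")
      case True
      then have "(t powr (-b)) powr q * t powr (q*a - 1) = t powr (q*(a-b) - 1)"
        by (simp add: powr_powr powr_add[symmetric] algebra_simps)
      then show ?thesis using True rearr_eq[of t] power_tail_ge_1[OF b_pos, of t]
        by (simp add: ennreal_mult[symmetric] del: ennreal_mult)
    qed simp
  qed
  also have "\<dots> = ennreal (-(1 powr (q*(a-b) - 1 + 1)) / (q*(a-b) - 1 + 1))"
    by (rule nn_integral_powr_Ioi) (use q_pos a_less_b in \<open>auto simp: mult_pos_neg\<close>)
  also have "-(1 powr (q*(a-b) - 1 + 1)) / (q*(a-b) - 1 + 1) = 1/(q*(b-a))"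
    using q_pos a_less_b by (simp add: field_simps)
  also have "1 powr (q*a - 1 + 1) / (q*a - 1 + 1) = 1/(q*a)" by simp
  finally have "star_integral = ennreal (1/(q*a)) + ennreal (1/(q*(b-a)))" .
  moreover have "1/(q*a) + 1/(q*(b-a)) = b / (q*a*(b-a))"
    using q_pos a_gt_1 a_less_b by (simp add: field_simps)
  ultimately show ?thesis using q_pos a_gt_1 a_less_b by (simp add: ennreal_plus[symmetric] del: ennreal_plus)
qed

lemma tail_eq_ge_1: assumes "1 \<le> t" shows "tail t = ennreal (t powr (1-b) / (b-1))"
proof -
  have "tail t = (\<integral>\<^sup>+u. ennreal (u powr (-b)) * indicator {t<..} u \<partial>lborel)"
    unfolding tail_def using assms by (intro nn_integral_cong) (auto simp: indicator_def rearr_eq power_tail_ge_1 b_pos)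
  also have "\<dots> = ennreal (-(t powr (-b+1)) / (-b+1))"
    by (rule nn_integral_powr_Ioi) (use b_gt_1 assms in auto)
  also have "-(t powr (-b+1)) / (-b+1) = t powr (1-b) / (b-1)"
    using b_gt_1 by (simp add: field_simps)
  finally show ?thesis .
qed

lemma tail_le: assumes "0 < t" shows "tail t \<le> ennreal (b/(b-1))"
proof -
  have "tail t \<le> (\<integral>\<^sup>+u. ennreal (power_tail b u) * indicator {0<..} u \<partial>lborel)"
    unfolding tail_def
  proof (intro nn_integral_mono)
    fix u show "rearr lborel (power_tail b) u * indicator {t<..} u \<le> ennreal (power_tail b u) * indicator {0<..} u"
      using assms rearr_eq[of u] by (cases "t < u") (auto simp: indicator_def)
  qed
  also have "\<dots> = (\<integral>\<^sup>+u. ennreal (power_tail b u) * indicator {0<..<1} u \<partial>lborel) + (\<integral>\<^sup>+u. ennreal (power_tail b u) * indicator {1<..} u \<partial>lborel)"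
    by (rule nn_integral_Ioi_split) simp
  also have "(\<integral>\<^sup>+u. ennreal (power_tail b u) * indicator {0<..<1} u \<partial>lborel) = 1"
  proof -
    have e: "(\<lambda>u. ennreal (power_tail b u) * indicator {0<..<1} u) = indicator {0<..<1}"
      by (auto simp: fun_eq_iff indicator_def power_tail_lt_1 b_pos)
    show ?thesis unfolding e by (subst nn_integral_indicator) auto
  qed
  also have "(\<integral>\<^sup>+u. ennreal (power_tail b u) * indicator {1<..} u \<partial>lborel) = (\<integral>\<^sup>+u. ennreal (u powr (-b)) * indicator {1<..} u \<partial>lborel)"
    by (intro nn_integral_cong) (auto simp: indicator_def power_tail_ge_1 b_pos)
  also have "\<dots> = ennreal (-(1 powr (-b+1)) / (-b+1))"
    by (rule nn_integral_powr_Ioi) (use b_gt_1 in auto)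
  also have "1 + ennreal (-(1 powr (-b+1)) / (-b+1)) = ennreal (b/(b-1))"
  proof -
    have "1 + -(1 powr (-b+1)) / (-b+1) = b/(b-1)" using b_gt_1 by (simp add: field_simps)
    moreover have "0 \<le> -(1 powr (-b+1)) / (-b+1)" using b_gt_1 by (simp add: divide_simps)
    ultimately show ?thesis by (metis ennreal_1 ennreal_plus zero_le_one)
  qed
  finally show ?thesis .
qed

definition sstar_lower_bound where "sstar_lower_bound = (b-1) powr (-q) / (q*(b-a))"
definition sstar_upper_bound where "sstar_upper_bound = (b/(b-1)) powr q / (q*c) + sstar_lower_bound"

lemma nn_integral_tail_Ici_1: "(\<integral>\<^sup>+t. enn_powr (tail t) q * ennreal (t powr (q*c - 1)) * indicator {1..} t \<partial>lborel) = ennreal sstar_lower_bound"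
proof -
  have "(\<integral>\<^sup>+t. enn_powr (tail t) q * ennreal (t powr (q*c - 1)) * indicator {1..} t \<partial>lborel)
      = (\<integral>\<^sup>+t. ennreal ((b-1) powr (-q)) * (ennreal (t powr (q*(a-b) - 1)) * indicator {1..} t) \<partial>lborel)"
  proof (intro nn_integral_cong)
    fix t show "enn_powr (tail t) q * ennreal (t powr (q*c - 1)) * indicator {1..} t
       = ennreal ((b-1) powr (-q)) * (ennreal (t powr (q*(a-b) - 1)) * indicator {1..} t)"
    proof (cases "1 \<le> t")
      case True
      have "(t powr (1-b) / (b-1)) powr q * t powr (q*c - 1) = (b-1) powr (-q) * t powr (q*(a-b) - 1)"
      proof -
        have "(t powr (1-b) / (b-1)) powr q = t powr ((1-b)*q) / (b-1) powr q"
          using True b_gt_1 by (simp add: powr_divide powr_powr)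
        then have "(t powr (1-b) / (b-1)) powr q * t powr (q*c - 1) = (1 / (b-1) powr q) * (t powr ((1-b)*q) * t powr (q*c - 1))"
          by simp
        also have "t powr ((1-b)*q) * t powr (q*c - 1) = t powr (q*(a-b) - 1)"
          using True by (simp add: powr_add[symmetric] c_def algebra_simps)
        also have "1 / (b-1) powr q = (b-1) powr (-q)" using b_gt_1 by (simp add: powr_minus_divide)
        finally show ?thesis .
      qed
      then show ?thesis using True tail_eq_ge_1[OF True] b_gt_1
        by (simp add: ennreal_mult[symmetric] mult.assoc del: ennreal_mult)
    qed simp
  qed
  also have "\<dots> = ennreal ((b-1) powr (-q)) * (\<integral>\<^sup>+t. ennreal (t powr (q*(a-b) - 1)) * indicator {1..} t \<partial>lborel)"
    by (rule nn_integral_cmult) simp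
  also have "(\<integral>\<^sup>+t. ennreal (t powr (q*(a-b) - 1)) * indicator {1..} t \<partial>lborel)
      = (\<integral>\<^sup>+t. ennreal (t powr (q*(a-b) - 1)) * indicator {1<..} t \<partial>lborel)"
    by (rule nn_integral_indicator_cong_two_points[of 1 1]) (auto simp: indicator_def)
  also have "\<dots> = ennreal (-(1 powr (q*(a-b) - 1 + 1)) / (q*(a-b) - 1 + 1))"
    by (rule nn_integral_powr_Ioi) (use q_pos a_less_b in \<open>auto simp: mult_pos_neg\<close>)
  also have "ennreal ((b-1) powr (-q)) * \<dots> = ennreal sstar_lower_bound"
  proof -
    have "-(1 powr (q*(a-b) - 1 + 1)) / (q*(a-b) - 1 + 1) = 1 / (q*(b-a))"
      using q_pos a_less_b by (simp add: field_simps)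
    moreover have "0 \<le> 1 / (q*(b-a))" using q_pos a_less_b by simp
    ultimately show ?thesis unfolding sstar_lower_bound_def by (simp add: ennreal_mult[symmetric] del: ennreal_mult)
  qed
  finally show ?thesis .
qed

lemma sstar_integral_lower: "ennreal sstar_lower_bound \<le> sstar_integral"
  unfolding sstar_integral_def nn_integral_tail_Ici_1[symmetric]
  by (intro nn_integral_mono mult_left_mono) (auto simp: indicator_def)

lemma sstar_integral_upper: "sstar_integral \<le> ennreal sstar_upper_bound"
proof -
  have "sstar_integral \<le> (\<integral>\<^sup>+t. ennreal ((b/(b-1)) powr q) * (ennreal (t powr (q*c - 1)) * indicator {0<..<1} t)
       + enn_powr (tail t) q * ennreal (t powr (q*c - 1)) * indicator {1..} t \<partial>lborel)"
    unfolding sstar_integral_def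
  proof (intro nn_integral_mono)
    fix t show "enn_powr (tail t) q * ennreal (t powr (q*c - 1)) * indicator {0<..} t
      \<le> ennreal ((b/(b-1)) powr q) * (ennreal (t powr (q*c - 1)) * indicator {0<..<1} t)
       + enn_powr (tail t) q * ennreal (t powr (q*c - 1)) * indicator {1..} t"
    proof (cases "0 < t \<and> t < 1")
      case True
      have "enn_powr (tail t) q \<le> enn_powr (ennreal (b/(b-1))) q"
        using tail_le[of t] True q_pos by (intro enn_powr_mono) auto
      then have "enn_powr (tail t) q \<le> ennreal ((b/(b-1)) powr q)" using b_gt_1 by simp
      then show ?thesis using True by (auto simp: indicator_def intro: mult_right_mono)
    next
      case False
      then consider "t \<le> 0" | "1 \<le> t" by linarith
      then show ?thesis by cases (auto simp: indicator_def)
    qed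
  qed
  also have "\<dots> = ennreal ((b/(b-1)) powr q) * (\<integral>\<^sup>+t. ennreal (t powr (q*c - 1)) * indicator {0<..<1} t \<partial>lborel)
       + (\<integral>\<^sup>+t. enn_powr (tail t) q * ennreal (t powr (q*c - 1)) * indicator {1..} t \<partial>lborel)"
    by (subst nn_integral_add) (auto simp: nn_integral_cmult)
  also have "(\<integral>\<^sup>+t. ennreal (t powr (q*c - 1)) * indicator {0<..<1} t \<partial>lborel) = ennreal (1 powr (q*c - 1 + 1) / (q*c - 1 + 1))"
    by (rule nn_integral_powr_Ioo_0) (use q_pos c_pos in auto)
  also have "(\<integral>\<^sup>+t. enn_powr (tail t) q * ennreal (t powr (q*c - 1)) * indicator {1..} t \<partial>lborel) = ennreal sstar_lower_bound"
    by (rule nn_integral_tail_Ici_1)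
  also have "ennreal ((b/(b-1)) powr q) * ennreal (1 powr (q*c - 1 + 1) / (q*c - 1 + 1)) + ennreal sstar_lower_bound = ennreal sstar_upper_bound"
  proof -
    have "0 \<le> sstar_lower_bound" unfolding sstar_lower_bound_def using q_pos a_less_b by simp
    moreover have "0 \<le> 1 / (q*c)" using q_pos c_pos by simp
    ultimately show ?thesis unfolding sstar_upper_bound_def using q_pos c_pos
      by (simp add: ennreal_mult[symmetric] ennreal_plus[symmetric] del: ennreal_mult ennreal_plus)
  qed
  finally show ?thesis .
qed

lemma star_integral_pos: "0 < star_integral"
  and star_integral_finite: "star_integral < \<infinity>"
  using star_integral_eq q_pos a_gt_1 a_less_b by simp_all

lemma sstar_integral_ge_coefficient:
  "ennreal (a/b * (b-1) powr (-q)) * star_integral \<le> sstar_integral"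
proof -
  have "a/b * (b-1) powr (-q) * (b / (q*a*(b-a))) = sstar_lower_bound"
    using q_pos a_gt_1 a_less_b unfolding sstar_lower_bound_def by (simp add: field_simps)
  then have "ennreal (a/b * (b-1) powr (-q)) * star_integral = ennreal sstar_lower_bound"
    unfolding star_integral_eq using q_pos a_gt_1 a_less_b
    by (subst ennreal_mult[symmetric]) auto
  then show ?thesis using sstar_integral_lower by simp
qed

lemma sstar_integral_le_coefficient:
  "sstar_integral \<le> ennreal (a/b * (b-1) powr (-q) + a*(b-a)/((a-1)*b) * (b/(b-1)) powr q) * star_integral"
proof -
  define k m S X where "k = a/b * (b-1) powr (-q)" and "m = a*(b-a)/((a-1)*b)"
    and "S = b / (q*a*(b-a))" and "X = (b/(b-1)) powr q"
  have "b - a \<noteq> 0" "a - 1 \<noteq> 0" "b \<noteq> 0" "a \<noteq> 0" using a_gt_1 a_less_b by auto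
  then have "m * S = 1 / (q*c)"
    unfolding m_def S_def c_def by (simp add: divide_simps)
  moreover have "k * S = sstar_lower_bound"
    using q_pos a_gt_1 a_less_b unfolding k_def S_def sstar_lower_bound_def by (simp add: field_simps)
  moreover have "(k + m * X) * S = k * S + X * (m * S)" by (simp add: algebra_simps)
  ultimately have "(k + m * X) * S = sstar_upper_bound"
    unfolding sstar_upper_bound_def X_def by simp
  moreover have "0 \<le> k" "0 \<le> m" "0 \<le> X" "0 \<le> S"
    using q_pos a_gt_1 a_less_b unfolding k_def m_def S_def X_def by simp_all
  ultimately have "ennreal (k + m * X) * star_integral = ennreal sstar_upper_bound"
    unfolding star_integral_eq S_def[symmetric]
    by (simp add: ennreal_mult[symmetric] ennreal_plus[symmetric] del: ennreal_mult ennreal_plus)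
  then show ?thesis using sstar_integral_upper unfolding k_def m_def X_def by simp
qed

end

lemma tendsto_power_tail_coefficients:
  fixes a q :: real
  assumes "1 < a"
  shows "((\<lambda>b. a/b * (b-1) powr (-q)) \<longlongrightarrow> (a-1) powr (-q)) (at_right a)"
    and "((\<lambda>b. a/b * (b-1) powr (-q) + a*(b-a)/((a-1)*b) * (b/(b-1)) powr q)
           \<longlongrightarrow> (a-1) powr (-q)) (at_right a)"
proof -
  have "((\<lambda>b. a/b * (b-1) powr (-q)) \<longlongrightarrow> a/a * (a-1) powr (-q)) (at_right a)"
    "((\<lambda>b. a/b * (b-1) powr (-q) + a*(b-a)/((a-1)*b) * (b/(b-1)) powr q)
       \<longlongrightarrow> a/a * (a-1) powr (-q) + a*(a-a)/((a-1)*a) * (a/(a-1)) powr q) (at_right a)"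
    using assms by (intro tendsto_intros; simp)+
  then show "((\<lambda>b. a/b * (b-1) powr (-q)) \<longlongrightarrow> (a-1) powr (-q)) (at_right a)"
    and "((\<lambda>b. a/b * (b-1) powr (-q) + a*(b-a)/((a-1)*b) * (b/(b-1)) powr q)
       \<longlongrightarrow> (a-1) powr (-q)) (at_right a)"
    using assms by simp_all
qed

lemma power_tail_borel_measurable: "power_tail b \<in> borel_measurable lborel"
  using power_tail_measurable[of b] by (simp add: measurable_lborel1)

lemma Hardy_constant_sharp_below:
  fixes p q :: real
  assumes p: "0 < p" "p < 1" and q: "0 < q" and C: "C < - pconj p"
  shows "\<exists>f::real \<Rightarrow> real. f \<in> borel_measurable lborel \<and>
           ennreal C * lorentz_star lborel f p q < lorentz_sstar lborel f p q"
proof -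
  define a where "a = 1/p"
  have a: "1 < a" using p by (simp add: a_def)
  have "((\<lambda>b. (a/b * (b-1) powr (-q)) powr (1/q)) \<longlongrightarrow> ((a-1) powr (-q)) powr (1/q)) (at_right a)"
    using tendsto_power_tail_coefficients(1)[OF a] a by (intro tendsto_intros) auto
  moreover have "((a-1) powr (-q)) powr (1/q) = - pconj p"
  proof -
    have "((a-1) powr (-q)) powr (1/q) = (a-1) powr (-1)" using q by (simp add: powr_powr)
    then show ?thesis using pconj_eq(2)[OF p] a by (simp add: a_def powr_minus_divide)
  qed
  ultimately have "eventually (\<lambda>b. C < (a/b * (b-1) powr (-q)) powr (1/q)) (at_right a)"
    using C by (intro order_tendstoD(1)) auto
  then obtain b where b: "a < b" "C < (a/b * (b-1) powr (-q)) powr (1/q)"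
    by (rule eventually_at_right_witness)
  interpret power_tail_profile b q a by unfold_locales (use q a b in auto)
  have "ennreal C * lorentz_star lborel (power_tail b) p q < lorentz_sstar lborel (power_tail b) p q"
    unfolding lorentz_star_eq[OF p q] lorentz_sstar_eq[OF p q] a_def[symmetric]
    using q a b star_integral_pos star_integral_finite sstar_integral_ge_coefficient
    by (intro coefficient_less_enn_powr) auto
  then show ?thesis using power_tail_borel_measurable by blast
qed

lemma Hardy_constant_sharp_above:
  fixes p q :: real
  assumes p: "0 < p" "p < 1" and q: "0 < q" and C: "- pconj p < C"
  shows "\<exists>f::real \<Rightarrow> real. f \<in> borel_measurable lborel \<and>
           lorentz_sstar lborel f p q < ennreal C * lorentz_star lborel f p q"
proof -
  define a where "a = 1/p"
  have a: "1 < a" using p by (simp add: a_def)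
  have Hardy: "- pconj p = 1/(a-1)" using pconj_eq(2)[OF p] by (simp add: a_def)
  moreover have "0 < 1/(a-1)" using a by simp
  ultimately have "0 < C" using C by linarith
  have "(a-1) powr (-q) = (1/(a-1)) powr q" using a by (simp add: powr_minus_divide powr_divide)
  also have "\<dots> < C powr q" using C Hardy a q by (intro powr_less_mono2) auto
  finally have "eventually (\<lambda>b. a/b * (b-1) powr (-q) + a*(b-a)/((a-1)*b) * (b/(b-1)) powr q < C powr q)
      (at_right a)"
    using tendsto_power_tail_coefficients(2)[OF a] by (intro order_tendstoD(2)) auto
  then obtain b where b: "a < b" "a/b * (b-1) powr (-q) + a*(b-a)/((a-1)*b) * (b/(b-1)) powr q < C powr q"
    by (rule eventually_at_right_witness)
  interpret power_tail_profile b q a by unfold_locales (use q a b in auto)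
  have "lorentz_sstar lborel (power_tail b) p q < ennreal C * lorentz_star lborel (power_tail b) p q"
    unfolding lorentz_star_eq[OF p q] lorentz_sstar_eq[OF p q] a_def[symmetric]
    using q a b \<open>0 < C\<close> star_integral_pos star_integral_finite sstar_integral_le_coefficient
    by (intro enn_powr_less_of_coefficient) auto
  then show ?thesis using power_tail_borel_measurable by blast
qed

theorem mainTheorem12:
  fixes p q :: real
  assumes "0 < p" "p < 1" "0 < q"
  shows
    "(\<forall>(M::'a measure) (f::'a \<Rightarrow> real). f \<in> borel_measurable M \<longrightarrow>
        (1 \<le> q \<longrightarrow>
           ennreal ((q * Beta q (- q / pconj p)) powr (1/q)) * lorentz_star M f p q \<le> lorentz_sstar M f p q
         \<and> lorentz_sstar M f p q \<le> ennreal (- pconj p) * lorentz_star M f p q)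
      \<and> (q \<le> 1 \<longrightarrow>
           lorentz_sstar M f p q \<le> ennreal ((q * Beta q (- q / pconj p)) powr (1/q)) * lorentz_star M f p q
         \<and> ennreal (- pconj p) * lorentz_star M f p q \<le> lorentz_sstar M f p q))
   \<and> (1 \<le> q \<longrightarrow>
        (\<forall>C::real. C > (q * Beta q (- q / pconj p)) powr (1/q) \<longrightarrow>
           (\<exists>f::real \<Rightarrow> real. f \<in> borel_measurable lborel \<and>
              lorentz_sstar lborel f p q < ennreal C * lorentz_star lborel f p q))
      \<and> (\<forall>C::real. C < - pconj p \<longrightarrow>
           (\<exists>f::real \<Rightarrow> real. f \<in> borel_measurable lborel \<and>
              ennreal C * lorentz_star lborel f p q < lorentz_sstar lborel f p q)))
   \<and> (q \<le> 1 \<longrightarrow>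
        (\<forall>C::real. C < (q * Beta q (- q / pconj p)) powr (1/q) \<longrightarrow>
           (\<exists>f::real \<Rightarrow> real. f \<in> borel_measurable lborel \<and>
              ennreal C * lorentz_star lborel f p q < lorentz_sstar lborel f p q))
      \<and> (\<forall>C::real. C > - pconj p \<longrightarrow>
           (\<exists>f::real \<Rightarrow> real. f \<in> borel_measurable lborel \<and>
              lorentz_sstar lborel f p q < ennreal C * lorentz_star lborel f p q)))"
  using lorentz_norm_inequalities[OF assms] Beta_constant_sharp[OF assms]
    Hardy_constant_sharp_below[OF assms] Hardy_constant_sharp_above[OF assms]
  by blast
end
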